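(* Let $G$ be a 2-connected graph. Then $\mathrm{lct}(G)\leq \mathrm{tw}(G)+1$. Moreover, if $G$ is chordal, then $\mathrm{lct}(G)\leq\omega(G)$.
   Context: All graphs are finite and simple. A longest cycle transversal of $G$ is a set of vertices meeting every longest cycle (cycle of maximum length) of $G$; $\mathrm{lct}(G)$ is the minimum cardinality of such a set. $\mathrm{tw}(G)$ is the treewidth of $G$: the minimum over tree decompositions $(T,\{V_t\})$ of $G$ of $\max_t |V_t|-1$. A graph is chordal if every induced cycle has length three. $\omega(G)$ is the cardinality of a maximum clique of $G$. *)

theory Defs
  imports Main
begin

definition graph :: "'a set \<Rightarrow> ('a \<Rightarrow> 'a \<Rightarrow> bool) \<Rightarrow> bool" where
  "graph V E \<longleftrightarrow> finite V \<and> (\<forall>u v. E u v \<longrightarrow> u \<in> V \<and> v \<in> V \<and> u \<noteq> v \<and> E v u)"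

definition connected_on :: "'a set \<Rightarrow> ('a \<Rightarrow> 'a \<Rightarrow> bool) \<Rightarrow> bool" where
  "connected_on W E \<longleftrightarrow>
     (\<forall>u\<in>W. \<forall>v\<in>W. (\<lambda>x y. E x y \<and> x \<in> W \<and> y \<in> W)\<^sup>*\<^sup>* u v)"

definition two_connected :: "'a set \<Rightarrow> ('a \<Rightarrow> 'a \<Rightarrow> bool) \<Rightarrow> bool" where
  "two_connected V E \<longleftrightarrow> card V > 2 \<and> (\<forall>X \<subseteq> V. card X < 2 \<longrightarrow> connected_on (V - X) E)"

definition is_cycle :: "'a set \<Rightarrow> ('a \<Rightarrow> 'a \<Rightarrow> bool) \<Rightarrow> 'a list \<Rightarrow> bool" where
  "is_cycle V E c \<longleftrightarrow> length c \<ge> 3 \<and> distinct c \<and> set c \<subseteq> V \<and>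
     (\<forall>i < length c. E (c ! i) (c ! ((i + 1) mod length c)))"

definition longest_cycle :: "'a set \<Rightarrow> ('a \<Rightarrow> 'a \<Rightarrow> bool) \<Rightarrow> 'a list \<Rightarrow> bool" where
  "longest_cycle V E c \<longleftrightarrow> is_cycle V E c \<and> (\<forall>c'. is_cycle V E c' \<longrightarrow> length c' \<le> length c)"

definition lct :: "'a set \<Rightarrow> ('a \<Rightarrow> 'a \<Rightarrow> bool) \<Rightarrow> nat" where
  "lct V E = (LEAST k. \<exists>S \<subseteq> V. card S = k \<and>
       (\<forall>c. longest_cycle V E c \<longrightarrow> set c \<inter> S \<noteq> {}))"

definition induced_cycle :: "'a set \<Rightarrow> ('a \<Rightarrow> 'a \<Rightarrow> bool) \<Rightarrow> 'a list \<Rightarrow> bool" where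
  "induced_cycle V E c \<longleftrightarrow> is_cycle V E c \<and>
     (\<forall>i < length c. \<forall>j < length c. E (c ! i) (c ! j) \<longrightarrow>
        j = (i + 1) mod length c \<or> i = (j + 1) mod length c)"

definition chordal :: "'a set \<Rightarrow> ('a \<Rightarrow> 'a \<Rightarrow> bool) \<Rightarrow> bool" where
  "chordal V E \<longleftrightarrow> (\<forall>c. induced_cycle V E c \<longrightarrow> length c = 3)"

definition clique_number :: "'a set \<Rightarrow> ('a \<Rightarrow> 'a \<Rightarrow> bool) \<Rightarrow> nat" where
  "clique_number V E = Max {card K | K. K \<subseteq> V \<and> (\<forall>u\<in>K. \<forall>v\<in>K. u \<noteq> v \<longrightarrow> E u v)}"

definition is_tree :: "'b set \<Rightarrow> ('b \<Rightarrow> 'b \<Rightarrow> bool) \<Rightarrow> bool" where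
  "is_tree I F \<longleftrightarrow> graph I F \<and> I \<noteq> {} \<and> connected_on I F \<and> \<not> (\<exists>c. is_cycle I F c)"

definition tree_decomposition ::
  "'a set \<Rightarrow> ('a \<Rightarrow> 'a \<Rightarrow> bool) \<Rightarrow> 'b set \<Rightarrow> ('b \<Rightarrow> 'b \<Rightarrow> bool) \<Rightarrow> ('b \<Rightarrow> 'a set) \<Rightarrow> bool" where
  "tree_decomposition V E I F B \<longleftrightarrow> is_tree I F \<and>
     (\<Union>t\<in>I. B t) = V \<and>
     (\<forall>u v. E u v \<longrightarrow> (\<exists>t\<in>I. u \<in> B t \<and> v \<in> B t)) \<and>
     (\<forall>v\<in>V. connected_on {t \<in> I. v \<in> B t} F)"

text \<open>Treewidth; tree nodes are indexed by natural numbers (w.l.o.g., trees are finite).\<close>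
definition treewidth :: "'a set \<Rightarrow> ('a \<Rightarrow> 'a \<Rightarrow> bool) \<Rightarrow> nat" where
  "treewidth V E = (LEAST k. \<exists>(I :: nat set) F B. tree_decomposition V E I F B \<and>
       k = Max ((\<lambda>t. card (B t)) ` I) - 1)"

end

theory Submission
  imports Defs
begin

text \<open>Any two longest cycles of a 2-connected graph meet: otherwise Menger's theorem yields two
  disjoint paths between them, and the longer arcs of both cycles together with these paths form
  a longer cycle. In a tree decomposition, the nodes whose bags meet a given longest cycle form a
  subtree; these subtrees pairwise intersect, so by the Helly property of subtrees one bag meets
  every longest cycle, whence lct \<le> tw + 1. A chordal graph has a tree decomposition into
  cliques (peel off simplicial vertices, which exist by Dirac's lemma), whence lct \<le> \<omega>.\<close>

section \<open>Paths and separators\<close>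

definition edges_within :: "('a \<Rightarrow> 'a \<Rightarrow> bool) \<Rightarrow> 'a set \<Rightarrow> 'a \<Rightarrow> 'a \<Rightarrow> bool" where
  "edges_within E W = (\<lambda>x y. E x y \<and> x \<in> W \<and> y \<in> W)"

lemma connected_on_iff_edges_within: "connected_on W E \<longleftrightarrow> (\<forall>u\<in>W. \<forall>v\<in>W. (edges_within E W)\<^sup>*\<^sup>* u v)"
  unfolding connected_on_def edges_within_def by simp

lemma rtranclp_distinct_path:
  assumes "R\<^sup>*\<^sup>* a b"
  shows "\<exists>p. p \<noteq> [] \<and> hd p = a \<and> last p = b \<and> successively R p \<and> distinct p"
  using assms
proof (induction rule: rtranclp_induct)
  case base
  then show ?case by (intro exI[of _ "[a]"]) auto
next
  case (step b c)
  then obtain p where p: "p \<noteq> []" "hd p = a" "last p = b" "successively R p" "distinct p" by blast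
  show ?case
  proof (cases "c \<in> set p")
    case True
    then obtain u w where uw: "p = u @ c # w" by (meson split_list)
    show ?thesis
    proof (intro exI[of _ "u @ [c]"] conjI)
      show "hd (u @ [c]) = a" using p uw by (cases u) auto
      show "successively R (u @ [c])" using p(4) uw
        by (auto simp: successively_append_iff successively_Cons)
      show "distinct (u @ [c])" using p(5) uw by auto
    qed auto
  next
    case False
    show ?thesis
    proof (intro exI[of _ "p @ [c]"] conjI)
      show "hd (p @ [c]) = a" using p by simp
      show "successively R (p @ [c])" using p step
        by (auto simp: successively_append_iff)
      show "distinct (p @ [c])" using p False by auto
    qed auto
  qed
qed

lemma successively_rtranclp_hd_nth:
  assumes "successively R p" "i < length p"
  shows "R\<^sup>*\<^sup>* (hd p) (p ! i)"
  using assms(2)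
proof (induction i)
  case 0
  then show ?case by (cases p) auto
next
  case (Suc i)
  then have "R (p ! i) (p ! Suc i)" using successively_nth[OF assms(1)] by blast
  with Suc show ?case by (meson Suc_lessD rtranclp.rtrancl_into_rtrancl)
qed

lemma successively_rtranclp_hd:
  assumes "successively R p" "p \<noteq> []" "x \<in> set p"
  shows "R\<^sup>*\<^sup>* (hd p) x"
  using assms successively_rtranclp_hd_nth by (metis in_set_conv_nth)

lemma successively_edges_within:
  assumes "successively E p" "set p \<subseteq> W"
  shows "successively (edges_within E W) p"
  using assms by (auto simp: edges_within_def intro: successively_mono)

lemma rtranclp_sym:
  assumes "\<And>x y. R x y \<Longrightarrow> R y x" "R\<^sup>*\<^sup>* a b"
  shows "R\<^sup>*\<^sup>* b a"
  using assms(2)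
  by (induction rule: rtranclp_induct) (auto intro: converse_rtranclp_into_rtranclp assms(1))

lemma is_cycle_iff_successively:
  "is_cycle V E c \<longleftrightarrow> 3 \<le> length c \<and> distinct c \<and> set c \<subseteq> V \<and> successively E c \<and> E (last c) (hd c)"
proof -
  have *: "(\<forall>i < length c. E (c ! i) (c ! ((i + 1) mod length c))) \<longleftrightarrow>
        successively E c \<and> E (last c) (hd c)" if "3 \<le> length c"
  proof
    assume a: "\<forall>i < length c. E (c ! i) (c ! ((i + 1) mod length c))"
    have "successively E c"
      unfolding successively_conv_nth
    proof (intro allI impI)
      fix i assume "Suc i < length c"
      then show "E (c ! i) (c ! Suc i)" using a[rule_format, of i] by simp
    qed
    moreover have "E (last c) (hd c)"
    proof -
      have s: "Suc (length c - Suc 0) = length c" using that by simp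
      have ne: "c \<noteq> []" using that by auto
      show ?thesis using a[rule_format, of "length c - 1"] that s
          by (simp add: last_conv_nth[OF ne] hd_conv_nth[OF ne])
    qed
    ultimately show "successively E c \<and> E (last c) (hd c)" by blast
  next
    assume a: "successively E c \<and> E (last c) (hd c)"
    show "\<forall>i < length c. E (c ! i) (c ! ((i + 1) mod length c))"
    proof (intro allI impI)
      fix i assume i: "i < length c"
      show "E (c ! i) (c ! ((i + 1) mod length c))"
      proof (cases "Suc i < length c")
        case True then show ?thesis using successively_nth a by fastforce
      next
        case False
        then have "i = length c - 1" using i by simp
        have ne: "c \<noteq> []" using that by auto
        have "Suc (length c - Suc 0) = length c" using that by simp
        then show ?thesis using a that \<open>i = _\<close> by (simp add: last_conv_nth[OF ne] hd_conv_nth[OF ne])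
      qed
    qed
  qed
  show ?thesis unfolding is_cycle_def using * by blast
qed

definition separates :: "('a \<Rightarrow> 'a \<Rightarrow> bool) \<Rightarrow> 'a set \<Rightarrow> 'a set \<Rightarrow> 'a set \<Rightarrow> bool" where
  "separates E A B X \<longleftrightarrow> (\<forall>a\<in>A-X. \<forall>b\<in>B-X. \<not> (edges_within E (-X))\<^sup>*\<^sup>* a b)"

definition ab_path :: "('a \<Rightarrow> 'a \<Rightarrow> bool) \<Rightarrow> 'a set \<Rightarrow> 'a set \<Rightarrow> 'a list \<Rightarrow> bool" where
  "ab_path E A B p \<longleftrightarrow> p \<noteq> [] \<and> distinct p \<and> successively E p \<and> hd p \<in> A \<and> last p \<in> B \<and>
     (\<forall>x\<in>set (tl p). x \<notin> A) \<and> (\<forall>x\<in>set (butlast p). x \<notin> B)"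

lemma edges_within_rtranclp_cases: "(edges_within R W)\<^sup>*\<^sup>* a v \<Longrightarrow> v = a \<or> v \<in> W"
  by (induction rule: rtranclp_induct) (auto simp: edges_within_def)

lemma edges_within_rtranclp_mono:
  assumes "(edges_within R W)\<^sup>*\<^sup>* a b" "W \<subseteq> W'" "\<And>u v. R u v \<Longrightarrow> R' u v"
  shows "(edges_within R' W')\<^sup>*\<^sup>* a b"
  using assms(1) by (rule rtranclp_mono[THEN predicate2D, rotated]) (use assms(2,3) in \<open>auto simp: edges_within_def\<close>)

lemma rtranclp_closed_mem:
  assumes "\<And>v w. v \<in> L \<Longrightarrow> R v w \<Longrightarrow> w \<in> L" "a \<in> L" "R\<^sup>*\<^sup>* a b"
  shows "b \<in> L"
  using assms(3,2) by (induction rule: rtranclp_induct) (auto intro: assms(1))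

lemma edges_within_rtranclp_sym:
  assumes "\<And>u v. R u v \<Longrightarrow> R v u" "(edges_within R W)\<^sup>*\<^sup>* a b"
  shows "(edges_within R W)\<^sup>*\<^sup>* b a"
  using assms(2) by (rule rtranclp_sym[rotated]) (auto simp: edges_within_def intro: assms(1))

lemma separates_sym:
  assumes "\<And>u v. R u v \<Longrightarrow> R v u"
  shows "separates R A B X \<longleftrightarrow> separates R B A X"
proof -
  have "\<And>a b. (edges_within R (-X))\<^sup>*\<^sup>* a b \<Longrightarrow> (edges_within R (-X))\<^sup>*\<^sup>* b a"
    by (rule edges_within_rtranclp_sym) (use assms in auto)
  then show ?thesis unfolding separates_def by blast
qed

lemma ab_path_rev:
  assumes "\<And>u v. R u v \<Longrightarrow> R v u" "ab_path R A B p"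
  shows "ab_path R B A (rev p)"
proof -
  have "successively R (rev p)" using assms
    by (auto simp: ab_path_def intro: successively_mono)
  moreover have "set (tl (rev p)) = set (butlast p)"
    by (metis butlast_rev rev_rev_ident set_rev)
  moreover have "set (butlast (rev p)) = set (tl p)"
    by (simp add: butlast_rev)
  ultimately show ?thesis using assms(2)
    by (auto simp: ab_path_def hd_rev last_rev)
qed

lemma ab_path_mono:
  assumes "ab_path R A B p" "\<And>u v. R u v \<Longrightarrow> R' u v"
  shows "ab_path R' A B p"
  using assms by (auto simp: ab_path_def intro: successively_mono)

definition reach_avoiding :: "('a \<Rightarrow> 'a \<Rightarrow> bool) \<Rightarrow> 'a set \<Rightarrow> 'a set \<Rightarrow> 'a set" where
  "reach_avoiding R P S = {v. \<exists>a\<in>P-S. (edges_within R (-S))\<^sup>*\<^sup>* a v}"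

lemma reach_avoiding_notin: "v \<in> reach_avoiding R P S \<Longrightarrow> v \<notin> S"
  unfolding reach_avoiding_def using edges_within_rtranclp_cases by fastforce

lemma reach_avoiding_base: "a \<in> P - S \<Longrightarrow> a \<in> reach_avoiding R P S"
  unfolding reach_avoiding_def by blast

lemma reach_avoiding_step: "v \<in> reach_avoiding R P S \<Longrightarrow> R v w \<Longrightarrow> w \<notin> S \<Longrightarrow> w \<in> reach_avoiding R P S"
proof -
  assume v: "v \<in> reach_avoiding R P S" and "R v w" "w \<notin> S"
  then obtain a where a: "a \<in> P - S" "(edges_within R (-S))\<^sup>*\<^sup>* a v" unfolding reach_avoiding_def by blast
  have "edges_within R (-S) v w" using reach_avoiding_notin[OF v] \<open>R v w\<close> \<open>w \<notin> S\<close> by (simp add: edges_within_def)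
  then have "(edges_within R (-S))\<^sup>*\<^sup>* a w" using a(2) by (rule rtranclp.rtrancl_into_rtrancl[rotated])
  then show ?thesis using a(1) unfolding reach_avoiding_def by blast
qed

lemma reach_avoiding_disjoint:
  assumes "separates R A B S" "\<And>u v. R u v \<Longrightarrow> R v u"
  shows "reach_avoiding R A S \<inter> reach_avoiding R B S = {}"
proof (rule ccontr)
  assume "reach_avoiding R A S \<inter> reach_avoiding R B S \<noteq> {}"
  then obtain v a b where "a \<in> A - S" "b \<in> B - S" "(edges_within R (-S))\<^sup>*\<^sup>* a v" "(edges_within R (-S))\<^sup>*\<^sup>* b v"
    unfolding reach_avoiding_def by blast
  moreover have "(edges_within R (-S))\<^sup>*\<^sup>* v b" using edges_within_rtranclp_sym[of R, OF assms(2)] calculation(4) by blast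
  ultimately show False using assms(1) unfolding separates_def by (meson rtranclp_trans)
qed

lemma reach_avoiding_separated:
  assumes "separates R A B S"
  shows "reach_avoiding R A S \<inter> B = {}"
  using assms reach_avoiding_notin unfolding separates_def reach_avoiding_def by fastforce

lemma ab_path_butlast_reach_avoiding:
  assumes "ab_path R A T p" "S \<subseteq> T"
  shows "set (butlast p) \<subseteq> reach_avoiding R A S"
proof (cases "butlast p = []")
  case True then show ?thesis by simp
next
  case False
  have p: "p \<noteq> []" "successively R p" "hd p \<in> A" "\<forall>x\<in>set (butlast p). x \<notin> T"
    using assms(1) by (auto simp: ab_path_def)
  have hb: "hd (butlast p) = hd p" using False p(1)
    by (metis append_butlast_last_id hd_append2)
  have sb: "successively R (butlast p)" using p(2) p(1)
    by (metis append_butlast_last_id successively_append_iff)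
  have "successively (edges_within R (-S)) (butlast p)"
    using sb p(4) assms(2) by (intro successively_edges_within) auto
  moreover have "hd p \<in> A - S" using p(3,4) hb False assms(2)
    by (metis DiffI hd_in_set subsetD)
  ultimately show ?thesis unfolding reach_avoiding_def
  proof (intro subsetI CollectI)
    fix v assume "successively (edges_within R (-S)) (butlast p)" "hd p \<in> A - S" "v \<in> set (butlast p)"
    then have "(edges_within R (-S))\<^sup>*\<^sup>* (hd (butlast p)) v" using successively_rtranclp_hd False by metis
    then show "\<exists>a\<in>A - S. (edges_within R (-S))\<^sup>*\<^sup>* a v" using \<open>hd p \<in> A - S\<close> hb by auto
  qed
qed

lemma ab_path_tl_reach_avoiding:
  assumes "ab_path R T B r" "S \<subseteq> T" "\<And>u v. R u v \<Longrightarrow> R v u"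
  shows "set (tl r) \<subseteq> reach_avoiding R B S"
proof -
  have "ab_path R B T (rev r)" by (rule ab_path_rev[OF assms(3) assms(1)])
  then have "set (butlast (rev r)) \<subseteq> reach_avoiding R B S" using assms(2) by (rule ab_path_butlast_reach_avoiding)
  moreover have "set (butlast (rev r)) = set (tl r)" by (simp add: butlast_rev)
  ultimately show ?thesis by simp
qed

lemma successively_append_tl:
  assumes "successively R xs" "successively R ys" "xs \<noteq> []" "last xs = hd ys"
  shows "successively R (xs @ tl ys)"
  using assms by (cases ys) (auto simp: successively_append_iff successively_Cons)

lemma set_conv_butlast_last: "p \<noteq> [] \<Longrightarrow> set p = insert (last p) (set (butlast p))"
  by (metis append_butlast_last_id set_append empty_set insert_is_Un list.simps(15) sup_commute)

lemma ab_path_append_tl: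
  assumes p: "ab_path E A T p" and r: "ab_path E U B r" and pr: "last p = hd r"
    and disj: "set p \<inter> set (tl r) = {}"
    and pB: "set (butlast p) \<inter> B = {}" and rA: "set (tl r) \<inter> A = {}"
  shows "ab_path E A B (p @ tl r)"
proof -
  have P: "p \<noteq> []" "distinct p" "successively E p" "hd p \<in> A" "\<forall>z\<in>set (tl p). z \<notin> A"
    using p by (auto simp: ab_path_def)
  have R: "r \<noteq> []" "distinct r" "successively E r" "last r \<in> B" "\<forall>z\<in>set (butlast r). z \<notin> B"
    using r by (auto simp: ab_path_def)
  have B_end: "last (p @ tl r) \<in> B \<and> (\<forall>z\<in>set (butlast (p @ tl r)). z \<notin> B)"
  proof (cases "tl r = []")
    case True
    then have "last p = last r" using pr R(1) by (cases r) auto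
    then show ?thesis using True R(4) pB by auto
  next
    case False
    then obtain h t where r_eq: "r = h # t" "t \<noteq> []" using R(1) by (cases r) auto
    have "set (butlast (p @ tl r)) = set (butlast p) \<union> insert h (set (butlast t))"
      using r_eq pr set_conv_butlast_last[OF P(1)] by (auto simp: butlast_append)
    moreover have "set (butlast r) = insert h (set (butlast t))" using r_eq by simp
    ultimately show ?thesis using r_eq R(4,5) pB by auto
  qed
  have "z \<notin> A" if "z \<in> set (tl (p @ tl r))" for z
    using that P(1,5) rA by (cases p) auto
  moreover have "successively E (p @ tl r)"
    using successively_append_tl[OF P(3) R(3) P(1) pr] .
  ultimately show ?thesis
    using P R(2) B_end disj by (auto simp: ab_path_def distinct_tl)
qed

lemma ab_path_append_edge:
  assumes p: "ab_path E A T p" and r: "ab_path E U B r" and e: "E (last p) (hd r)"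
    and disj: "set p \<inter> set r = {}" and pB: "set p \<inter> B = {}" and rA: "set r \<inter> A = {}"
  shows "ab_path E A B (p @ r)"
proof -
  have P: "p \<noteq> []" "distinct p" "successively E p" "hd p \<in> A" "\<forall>z\<in>set (tl p). z \<notin> A"
    using p by (auto simp: ab_path_def)
  have R: "r \<noteq> []" "distinct r" "successively E r" "last r \<in> B" "\<forall>z\<in>set (butlast r). z \<notin> B"
    using r by (auto simp: ab_path_def)
  have "z \<notin> A" if "z \<in> set (tl (p @ r))" for z
    using that P(1,5) rA by (cases p) auto
  moreover have "z \<notin> B" if "z \<in> set (butlast (p @ r))" for z
    using that R(1,5) pB by (auto simp: butlast_append)
  ultimately show ?thesis
    using P R disj e by (auto simp: ab_path_def successively_append_iff)
qed

section \<open>Menger's theorem for two paths\<close>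

definition delete_edge :: "('a \<Rightarrow> 'a \<Rightarrow> bool) \<Rightarrow> 'a \<Rightarrow> 'a \<Rightarrow> 'a \<Rightarrow> 'a \<Rightarrow> bool" where
  "delete_edge E x y = (\<lambda>u v. E u v \<and> {u, v} \<noteq> {x, y})"

lemma delete_edge_commute: "delete_edge E x y = delete_edge E y x"
  by (auto simp: delete_edge_def fun_eq_iff insert_commute)

lemma delete_edge_imp: "delete_edge E x y u v \<Longrightarrow> E u v"
  by (simp add: delete_edge_def)

lemma graph_delete_edge: "graph V E \<Longrightarrow> graph V (delete_edge E x y)"
  by (auto simp: graph_def delete_edge_def insert_commute)

lemma card_delete_edge_less:
  assumes "graph V E" "E x y"
  shows "card {(u, v). delete_edge E x y u v} < card {(u, v). E u v}"
proof (rule psubset_card_mono)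
  show "finite {(u, v). E u v}"
    by (rule finite_subset[of _ "V \<times> V"]) (use assms(1) in \<open>auto simp: graph_def\<close>)
  show "{(u, v). delete_edge E x y u v} \<subset> {(u, v). E u v}"
    using assms(2) by (auto simp: delete_edge_def)
qed

lemma separates_delete_edge_insert:
  assumes "separates (delete_edge E x y) A B S"
  shows "separates E A B (insert x S)"
proof -
  have "edges_within E (- insert x S) \<le> edges_within (delete_edge E x y) (- S)"
    by (auto simp: edges_within_def delete_edge_def doubleton_eq_iff)
  then show ?thesis
    using assms rtranclp_mono unfolding separates_def by blast
qed

text \<open>Since y lies off the side of A, the deleted edge xy can only be entered from that side
  through x.\<close>
lemma separates_delete_edge_transfer:
  fixes E :: "'a \<Rightarrow> 'a \<Rightarrow> bool" and x y :: 'a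
  defines "E' \<equiv> delete_edge E x y"
  assumes yA: "y \<notin> reach_avoiding E' A S"
    and sepS: "separates E' A B S"
    and sepX: "separates E' A (insert x S) X"
  shows "separates E A B X"
  unfolding separates_def
proof (intro ballI notI)
  fix a b assume a: "a \<in> A - X" and b: "b \<in> B - X" and r: "(edges_within E (-X))\<^sup>*\<^sup>* a b"
  have aS: "a \<notin> insert x S"
    using sepX a unfolding separates_def by blast
  define L where "L = {v. (edges_within E' (-(X \<union> insert x S)))\<^sup>*\<^sup>* a v}"
  have Lout: "v \<notin> X \<union> insert x S" if "v \<in> L" for v
    using that aS a edges_within_rtranclp_cases unfolding L_def by fastforce
  have LS: "(edges_within E' (-S))\<^sup>*\<^sup>* a v" and LX: "(edges_within E' (-X))\<^sup>*\<^sup>* a v"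
    if "v \<in> L" for v
  proof -
    have "(edges_within E' (-(X \<union> insert x S)))\<^sup>*\<^sup>* a v" using that by (simp add: L_def)
    then show "(edges_within E' (-S))\<^sup>*\<^sup>* a v" "(edges_within E' (-X))\<^sup>*\<^sup>* a v"
      by (auto elim: edges_within_rtranclp_mono)
  qed
  have LA: "v \<in> reach_avoiding E' A S" if "v \<in> L" for v
    using LS[OF that] aS a unfolding reach_avoiding_def by blast
  have "w \<in> L" if v: "v \<in> L" and st: "edges_within E (-X) v w" for v w
  proof (cases "E' v w")
    case True
    have "w \<notin> insert x S"
    proof
      assume "w \<in> insert x S"
      moreover have "(edges_within E' (-X))\<^sup>*\<^sup>* a w"
        using LX[OF v] True Lout[OF v] st by (auto simp: edges_within_def intro: rtranclp.rtrancl_into_rtrancl)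
      ultimately show False using sepX a st unfolding separates_def edges_within_def by blast
    qed
    then have "edges_within E' (-(X \<union> insert x S)) v w"
      using True Lout[OF v] st by (simp add: edges_within_def)
    then show ?thesis using v unfolding L_def by (simp add: rtranclp.rtrancl_into_rtrancl)
  next
    case False
    then have "{v, w} = {x, y}" using st by (simp add: E'_def delete_edge_def edges_within_def)
    then have "v = y" using Lout[OF v] by (auto simp: doubleton_eq_iff)
    then show ?thesis using LA[OF v] yA by blast
  qed
  then have "b \<in> L" using rtranclp_closed_mem[of L, OF _ _ r] unfolding L_def by simp
  then show False using LA reach_avoiding_separated[OF sepS] b by blast
qed

text \<open>A path in G - S from the side of P to a vertex off that side must use the deleted
  edge xy, which therefore has exactly one end on the side of P.\<close>
lemma delete_edge_ends_split:
  fixes E :: "'a \<Rightarrow> 'a \<Rightarrow> bool" and x y :: 'a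
  defines "E' \<equiv> delete_edge E x y"
  assumes a: "a \<in> P - S" and r: "(edges_within E (-S))\<^sup>*\<^sup>* a b"
    and b: "b \<notin> reach_avoiding E' P S"
  shows "(x \<in> reach_avoiding E' P S) \<noteq> (y \<in> reach_avoiding E' P S)"
proof
  assume eq: "(x \<in> reach_avoiding E' P S) = (y \<in> reach_avoiding E' P S)"
  have "w \<in> reach_avoiding E' P S"
    if v: "v \<in> reach_avoiding E' P S" and st: "edges_within E (-S) v w" for v w
  proof (cases "E' v w")
    case True
    then show ?thesis using reach_avoiding_step[OF v] st by (auto simp: edges_within_def)
  next
    case False
    then have "{v, w} = {x, y}" using st by (simp add: E'_def delete_edge_def edges_within_def)
    then show ?thesis using eq v by (auto simp: doubleton_eq_iff)
  qed
  then have "b \<in> reach_avoiding E' P S"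
    using rtranclp_closed_mem[OF _ reach_avoiding_base[OF a] r] by blast
  then show False using b by blast
qed

definition two_linked :: "('a \<Rightarrow> 'a \<Rightarrow> bool) \<Rightarrow> 'a set \<Rightarrow> 'a set \<Rightarrow> bool" where
  "two_linked E A B \<longleftrightarrow> (\<exists>p q. ab_path E A B p \<and> ab_path E A B q \<and> set p \<inter> set q = {})"

lemma two_linked_mono:
  "two_linked E A B \<Longrightarrow> (\<And>u v. E u v \<Longrightarrow> E' u v) \<Longrightarrow> two_linked E' A B"
  unfolding two_linked_def by (meson ab_path_mono)

lemma two_linked_sym:
  assumes "\<And>u v. E u v \<Longrightarrow> E v u" "two_linked E A B"
  shows "two_linked E B A"
proof -
  obtain p q where "ab_path E A B p" "ab_path E A B q" "set p \<inter> set q = {}"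
    using assms(2) unfolding two_linked_def by blast
  then have "ab_path E B A (rev p)" "ab_path E B A (rev q)" "set (rev p) \<inter> set (rev q) = {}"
    using ab_path_rev[OF assms(1)] by auto
  then show ?thesis unfolding two_linked_def by blast
qed

text \<open>The two cut paths end in x and in the cut vertex s, the two continuations start in y
  and in s: glue one pair at s and the other pair along the edge xy.\<close>
lemma join_ab_paths_at_cut:
  fixes E' :: "'a \<Rightarrow> 'a \<Rightarrow> bool" and A B :: "'a set" and s :: 'a
  defines "LA \<equiv> reach_avoiding E' A {s}" and "LB \<equiv> reach_avoiding E' B {s}"
  assumes sym: "\<And>u v. E' u v \<Longrightarrow> E' v u" and sub: "\<And>u v. E' u v \<Longrightarrow> E u v" and Exy: "E x y"
    and sepS: "separates E' A B {s}" and xA: "x \<in> LA" and yB: "y \<in> LB"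
    and p1: "ab_path E' A T p1" and p2: "ab_path E' A T p2" and ST: "s \<in> T"
    and lp1: "last p1 = s" and lp2: "last p2 = x"
    and r1: "ab_path E' U B r1" and r2: "ab_path E' U B r2" and SU: "s \<in> U"
    and hr1: "hd r1 = s" and hr2: "hd r2 = y"
    and d12: "set p1 \<inter> set p2 = {}" and dr: "set r1 \<inter> set r2 = {}"
  shows "two_linked E A B"
proof -
  have bp: "set (butlast p1) \<subseteq> LA" "set (butlast p2) \<subseteq> LA"
    unfolding LA_def using ST by (auto intro!: ab_path_butlast_reach_avoiding[OF p1]
        ab_path_butlast_reach_avoiding[OF p2])
  have tr: "set (tl r1) \<subseteq> LB" "set (tl r2) \<subseteq> LB"
    unfolding LB_def using SU ab_path_tl_reach_avoiding[OF r1 _ sym, of "{s}"]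
      ab_path_tl_reach_avoiding[OF r2 _ sym, of "{s}"] by auto
  have dAB: "LA \<inter> LB = {}" unfolding LA_def LB_def using sepS sym by (rule reach_avoiding_disjoint)
  have LAB: "LA \<inter> B = {}" unfolding LA_def using sepS by (rule reach_avoiding_separated)
  have LBA: "LB \<inter> A = {}"
    unfolding LB_def using sepS separates_sym[of E', OF sym] reach_avoiding_separated by blast
  have sL: "s \<notin> LA" "s \<notin> LB" unfolding LA_def LB_def by (auto dest: reach_avoiding_notin)
  have ne: "p1 \<noteq> []" "p2 \<noteq> []" "r1 \<noteq> []" "r2 \<noteq> []" using p1 p2 r1 r2 by (auto simp: ab_path_def)
  have p1LA: "set p1 \<subseteq> insert s LA"
    using set_conv_butlast_last[OF ne(1)] lp1 bp(1) by auto
  have p2LA: "set p2 \<subseteq> LA"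
    using set_conv_butlast_last[OF ne(2)] lp2 bp(2) xA by simp
  have r2LB: "set r2 \<subseteq> LB"
    using ne(4) hr2 tr(2) yB by (cases r2) auto
  have "ab_path E' A B (p1 @ tl r1)"
  proof (rule ab_path_append_tl[OF p1 r1])
    show "last p1 = hd r1" using lp1 hr1 by simp
    show "set p1 \<inter> set (tl r1) = {}" using p1LA tr(1) dAB sL by blast
    show "set (butlast p1) \<inter> B = {}" using bp(1) LAB by blast
    show "set (tl r1) \<inter> A = {}" using tr(1) LBA by blast
  qed
  then have "ab_path E A B (p1 @ tl r1)" by (rule ab_path_mono) (rule sub)
  moreover have "ab_path E A B (p2 @ r2)"
  proof (rule ab_path_append_edge[OF ab_path_mono[OF p2 sub] ab_path_mono[OF r2 sub]])
    show "E (last p2) (hd r2)" using lp2 hr2 Exy by simp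
    show "set p2 \<inter> set r2 = {}" using p2LA r2LB dAB by blast
    show "set p2 \<inter> B = {}" using p2LA LAB by blast
    show "set r2 \<inter> A = {}" using r2LB LBA by blast
  qed
  moreover have "set (p1 @ tl r1) \<inter> set (p2 @ r2) = {}"
  proof -
    have "set (tl r1) \<subseteq> set r1" using ne(3) by (cases r1) auto
    then have "set (tl r1) \<inter> set r2 = {}" using dr by blast
    moreover have "set p1 \<inter> set r2 = {}" using p1LA r2LB dAB sL(2) by blast
    moreover have "set (tl r1) \<inter> set p2 = {}" using tr(1) p2LA dAB by blast
    ultimately show ?thesis using d12 by auto
  qed
  ultimately show ?thesis unfolding two_linked_def by blast
qed

lemma join_ab_paths:
  assumes sym: "\<And>u v. E' u v \<Longrightarrow> E' v u" and sub: "\<And>u v. E' u v \<Longrightarrow> E u v" and Exy: "E x y"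
    and sepS: "separates E' A B {s}"
    and xA: "x \<in> reach_avoiding E' A {s}" and yB: "y \<in> reach_avoiding E' B {s}"
    and p: "two_linked E' A {x, s}" and r: "two_linked E' {y, s} B"
  shows "two_linked E A B"
proof -
  obtain p1 p2 where p: "ab_path E' A {x, s} p1" "ab_path E' A {x, s} p2"
    "last p1 = s" "last p2 = x" "set p1 \<inter> set p2 = {}"
  proof -
    obtain q1 q2 where q: "ab_path E' A {x, s} q1" "ab_path E' A {x, s} q2" "set q1 \<inter> set q2 = {}"
      using p unfolding two_linked_def by blast
    then have "q1 \<noteq> []" "q2 \<noteq> []" by (auto simp: ab_path_def)
    then have "last q1 \<noteq> last q2" using q(3) by (metis disjoint_iff last_in_set)
    moreover have "last q1 \<in> {x, s}" "last q2 \<in> {x, s}" using q(1,2) by (simp_all add: ab_path_def)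
    ultimately
    show ?thesis
      using that[OF q(1,2)] that[OF q(2,1)] q(3) by (auto simp: Int_commute)
  qed
  obtain r1 r2 where r: "ab_path E' {y, s} B r1" "ab_path E' {y, s} B r2"
    "hd r1 = s" "hd r2 = y" "set r1 \<inter> set r2 = {}"
  proof -
    obtain q1 q2 where q: "ab_path E' {y, s} B q1" "ab_path E' {y, s} B q2" "set q1 \<inter> set q2 = {}"
      using r unfolding two_linked_def by blast
    then have "q1 \<noteq> []" "q2 \<noteq> []" by (auto simp: ab_path_def)
    then have "hd q1 \<noteq> hd q2" using q(3) by (metis disjoint_iff hd_in_set)
    moreover have "hd q1 \<in> {y, s}" "hd q2 \<in> {y, s}" using q(1,2) by (simp_all add: ab_path_def)
    ultimately
    show ?thesis
      using that[OF q(1,2)] that[OF q(2,1)] q(3) by (auto simp: Int_commute)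
  qed
  show ?thesis
    by (rule join_ab_paths_at_cut[where E'=E' and E=E, OF sym sub Exy sepS xA yB p(1,2) _ p(3,4) r(1,2) _ r(3,4) p(5) r(5)])
      simp_all
qed

lemma rtranclp_edges_within_empty:
  assumes "\<forall>u v. \<not> E u v" "(edges_within E W)\<^sup>*\<^sup>* a b"
  shows "a = b"
  using assms(2) by (induction rule: rtranclp_induct) (use assms(1) in \<open>auto simp: edges_within_def\<close>)

lemma menger_two_no_edges:
  assumes G: "graph V E" and AV: "A \<subseteq> V" and noE: "\<forall>u v. \<not> E u v"
    and H: "\<forall>X. X \<subseteq> V \<longrightarrow> separates E A B X \<longrightarrow> 2 \<le> card X"
  shows "two_linked E A B"
proof -
  have "separates E A B (A \<inter> B)"
    unfolding separates_def using rtranclp_edges_within_empty[OF noE] by blast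
  then have "2 \<le> card (A \<inter> B)" using H AV by blast
  then obtain a1 a2 where "a1 \<in> A \<inter> B" "a2 \<in> A \<inter> B" "a1 \<noteq> a2"
    by (metis card_le_Suc0_iff_eq not_less_eq_eq numeral_2_eq_2 card.infinite zero_le)
  then have "ab_path E A B [a1]" "ab_path E A B [a2]" "set [a1] \<inter> set [a2] = {}"
    by (auto simp: ab_path_def)
  then show ?thesis unfolding two_linked_def by blast
qed

text \<open>No set smaller than 2 separates A from {x, s} in G - xy
  (nor {y, s} from B), so induction links them, and the linkages glue to one in G.\<close>
lemma menger_two_cut_vertex:
  fixes E :: "'a \<Rightarrow> 'a \<Rightarrow> bool" and x y :: 'a
  defines "E' \<equiv> delete_edge E x y"
  assumes G: "graph V E" and Exy: "E x y" and AV: "A \<subseteq> V" and BV: "B \<subseteq> V"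
    and H: "\<forall>X. X \<subseteq> V \<longrightarrow> separates E A B X \<longrightarrow> 2 \<le> card X"
    and IH: "\<And>A' B'. A' \<subseteq> V \<Longrightarrow> B' \<subseteq> V \<Longrightarrow>
      \<forall>X. X \<subseteq> V \<longrightarrow> separates E' A' B' X \<longrightarrow> 2 \<le> card X \<Longrightarrow> two_linked E' A' B'"
    and sV: "s \<in> V" and sepS: "separates E' A B {s}"
    and xA: "x \<in> reach_avoiding E' A {s}" and yA: "y \<notin> reach_avoiding E' A {s}"
    and yB: "y \<in> reach_avoiding E' B {s}" and xB: "x \<notin> reach_avoiding E' B {s}"
  shows "two_linked E A B"
proof -
  have symE: "\<And>u v. E u v \<Longrightarrow> E v u" using G by (auto simp: graph_def)
  have sym: "\<And>u v. E' u v \<Longrightarrow> E' v u"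
    using graph_delete_edge[OF G, of x y] unfolding E'_def graph_def by blast
  have sub: "\<And>u v. E' u v \<Longrightarrow> E u v" by (simp add: E'_def delete_edge_imp)
  have xyV: "x \<in> V" "y \<in> V" using G Exy by (auto simp: graph_def)
  have linkA: "two_linked E' A {x, s}"
  proof (rule IH)
    show "\<forall>X. X \<subseteq> V \<longrightarrow> separates E' A {x, s} X \<longrightarrow> 2 \<le> card X"
    proof (intro allI impI)
      fix X assume "X \<subseteq> V" and sepX: "separates E' A {x, s} X"
      from sepX have "separates E A B X"
        by (rule separates_delete_edge_transfer[where E=E and x=x and y=y, folded E'_def, OF yA sepS])
      then show "2 \<le> card X" using H \<open>X \<subseteq> V\<close> by blast
    qed
  qed (use AV sV xyV in auto)
  have linkB: "two_linked E' B {y, s}"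
  proof (rule IH)
    have sepBA: "separates E' B A {s}" using sepS separates_sym[of E', OF sym] by blast
    show "\<forall>X. X \<subseteq> V \<longrightarrow> separates E' B {y, s} X \<longrightarrow> 2 \<le> card X"
    proof (intro allI impI)
      fix X assume "X \<subseteq> V" and sepX: "separates E' B {y, s} X"
      from sepX have "separates E B A X"
        by (rule separates_delete_edge_transfer[where E=E and x=y and y=x,
              unfolded delete_edge_commute[of E y x], folded E'_def, OF xB sepBA])
      then show "2 \<le> card X" using H \<open>X \<subseteq> V\<close> separates_sym[of E, OF symE] by blast
    qed
  qed (use BV sV xyV in auto)
  show ?thesis
    by (rule join_ab_paths[where E'=E' and E=E, OF sym sub Exy sepS xA yB linkA
          two_linked_sym[where E=E', OF sym linkB]])
qed

lemma menger_two_delete_edge: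
  assumes G: "graph V E" and Exy: "E x y" and AV: "A \<subseteq> V" and BV: "B \<subseteq> V"
    and H: "\<forall>X. X \<subseteq> V \<longrightarrow> separates E A B X \<longrightarrow> 2 \<le> card X"
    and IH: "\<And>A' B'. A' \<subseteq> V \<Longrightarrow> B' \<subseteq> V \<Longrightarrow>
      \<forall>X. X \<subseteq> V \<longrightarrow> separates (delete_edge E x y) A' B' X \<longrightarrow> 2 \<le> card X \<Longrightarrow>
      two_linked (delete_edge E x y) A' B'"
  shows "two_linked E A B"
proof (cases "\<forall>X. X \<subseteq> V \<longrightarrow> separates (delete_edge E x y) A B X \<longrightarrow> 2 \<le> card X")
  case True
  then show ?thesis by (rule two_linked_mono[OF IH[OF AV BV] delete_edge_imp])
next
  case False
  then obtain S where SV: "S \<subseteq> V" and sepS: "separates (delete_edge E x y) A B S"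
    and cS: "card S < 2" by (auto simp: not_le)
  have symE: "\<And>u v. E u v \<Longrightarrow> E v u" using G by (auto simp: graph_def)
  have sym: "\<And>u v. delete_edge E x y u v \<Longrightarrow> delete_edge E x y v u"
    using graph_delete_edge[OF G] unfolding graph_def by blast
  have "separates E A B (insert x S)" "separates E A B (insert y S)"
    using separates_delete_edge_insert[where E=E and x=x and y=y]
      separates_delete_edge_insert[where E=E and x=y and y=x] sepS
    unfolding delete_edge_commute[of E y x] by blast+
  moreover have "insert x S \<subseteq> V" "insert y S \<subseteq> V" using SV G Exy by (auto simp: graph_def)
  ultimately have "2 \<le> card (insert x S)" "2 \<le> card (insert y S)" using H by blast+
  moreover have "finite S" using SV G finite_subset by (auto simp: graph_def)
  ultimately have "card S = 1"
    using cS by (auto simp: card_insert_if split: if_splits)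
  then obtain s where S: "S = {s}" by (auto simp: card_1_singleton_iff)
  then have sV: "s \<in> V" and sepS': "separates (delete_edge E x y) A B {s}" using SV sepS by auto
  have "\<not> separates E A B {s}"
  proof
    assume "separates E A B {s}"
    then have "2 \<le> card {s}" using H sV by blast
    then show False by simp
  qed
  then obtain a b where ab: "a \<in> A - {s}" "b \<in> B - {s}"
    and rab: "(edges_within E (-{s}))\<^sup>*\<^sup>* a b"
    unfolding separates_def by blast
  define LA where "LA = reach_avoiding (delete_edge E x y) A {s}"
  define LB where "LB = reach_avoiding (delete_edge E x y) B {s}"
  have dAB: "LA \<inter> LB = {}"
    unfolding LA_def LB_def using sepS' sym by (rule reach_avoiding_disjoint)
  have "(x \<in> LA) \<noteq> (y \<in> LA)"
    unfolding LA_def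
    by (rule delete_edge_ends_split[OF ab(1) rab])
      (use reach_avoiding_base[OF ab(2)] dAB in \<open>auto simp: LA_def LB_def\<close>)
  moreover have "(x \<in> LB) \<noteq> (y \<in> LB)"
    unfolding LB_def
    by (rule delete_edge_ends_split[OF ab(2) edges_within_rtranclp_sym[OF symE rab]])
      (use reach_avoiding_base[OF ab(1)] dAB in \<open>auto simp: LA_def LB_def\<close>)
  ultimately consider "x \<in> LA" "y \<notin> LA" "y \<in> LB" "x \<notin> LB"
    | "y \<in> LA" "x \<notin> LA" "x \<in> LB" "y \<notin> LB"
    using dAB by blast
  then show ?thesis
  proof cases
    case 1
    show ?thesis
      by (rule menger_two_cut_vertex[OF G Exy AV BV H IH sV sepS' 1[unfolded LA_def LB_def]])
  next
    case 2
    show ?thesis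
      by (rule menger_two_cut_vertex[where E=E and x=y and y=x, unfolded delete_edge_commute[of E y x],
            OF G symE[OF Exy] AV BV H IH sV sepS' 2[unfolded LA_def LB_def]])
  qed
qed

theorem menger_two:
  assumes "graph V E" "A \<subseteq> V" "B \<subseteq> V" "\<forall>X. X \<subseteq> V \<longrightarrow> separates E A B X \<longrightarrow> 2 \<le> card X"
  shows "two_linked E A B"
  using assms
proof (induction "card {(u, v). E u v}" arbitrary: E A B rule: less_induct)
  case less
  show ?case
  proof (cases "\<exists>x y. E x y")
    case False
    then show ?thesis using menger_two_no_edges less.prems by blast
  next
    case True
    then obtain x y where Exy: "E x y" by blast
    show ?thesis
    proof (rule menger_two_delete_edge[OF less.prems(1) Exy less.prems(2-4)])
      fix A' B' assume "A' \<subseteq> V" "B' \<subseteq> V"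
        "\<forall>X. X \<subseteq> V \<longrightarrow> separates (delete_edge E x y) A' B' X \<longrightarrow> 2 \<le> card X"
      then show "two_linked (delete_edge E x y) A' B'"
        using less.hyps[OF card_delete_edge_less[OF less.prems(1) Exy]]
          graph_delete_edge[OF less.prems(1)] by blast
    qed
  qed
qed

section \<open>Longest cycles in 2-connected graphs\<close>

lemma mod_add_left_inj_aux: "(i + t1) mod L = (i + t2) mod (L::nat) \<Longrightarrow> t1 < L \<Longrightarrow> t2 < L \<Longrightarrow> t1 \<le> t2 \<Longrightarrow> t1 = t2"
proof -
  assume a: "(i + t1) mod L = (i + t2) mod (L::nat)" "t1 < L" "t2 < L" "t1 \<le> t2"
  then have "L dvd (i + t2) - (i + t1)" using mod_eq_dvd_iff_nat[of "i+t1" "i+t2" L] by simp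
  then have "L dvd t2 - t1" by simp
  moreover have "t2 - t1 < L" using a by simp
  ultimately have "t2 - t1 = 0" using dvd_imp_le by (metis not_less neq0_conv)
  then show ?thesis using a by simp
qed
lemma mod_add_left_inj: "(i + t1) mod L = (i + t2) mod (L::nat) \<Longrightarrow> t1 < L \<Longrightarrow> t2 < L \<Longrightarrow> t1 = t2"
  by (metis mod_add_left_inj_aux nat_le_linear)

definition cycle_arc :: "'a list \<Rightarrow> nat \<Rightarrow> nat \<Rightarrow> 'a list" where
  "cycle_arc c i m = map (\<lambda>t. c ! ((i + t) mod length c)) [0..<Suc m]"

lemma is_cycle_adj:
  assumes "is_cycle V E c" "a < length c"
  shows "E (c ! a) (c ! (Suc a mod length c))"
  using assms unfolding is_cycle_def by simp

lemma cycle_arc_props: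
  assumes cyc: "is_cycle V E c" and m: "m < length c" and i: "i < length c"
  shows "distinct (cycle_arc c i m)" "successively E (cycle_arc c i m)" "set (cycle_arc c i m) \<subseteq> set c"
    "hd (cycle_arc c i m) = c ! i" "last (cycle_arc c i m) = c ! ((i + m) mod length c)" "length (cycle_arc c i m) = Suc m"
proof -
  let ?L = "length c"
  have L: "0 < ?L" using i by linarith
  have dc: "distinct c" using cyc by (simp add: is_cycle_def)
  show "distinct (cycle_arc c i m)"
    unfolding cycle_arc_def distinct_map
  proof
    show "distinct [0..<Suc m]" by simp
    show "inj_on (\<lambda>t. c ! ((i + t) mod ?L)) (set [0..<Suc m])"
    proof (rule inj_onI)
      fix t1 t2 assume t: "t1 \<in> set [0..<Suc m]" "t2 \<in> set [0..<Suc m]"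
        and eq: "c ! ((i + t1) mod ?L) = c ! ((i + t2) mod ?L)"
      have "(i + t1) mod ?L = (i + t2) mod ?L"
        using eq dc L nth_eq_iff_index_eq by (metis mod_less_divisor)
      moreover have "t1 < ?L" "t2 < ?L" using t m by auto
      ultimately show "t1 = t2" by (rule mod_add_left_inj)
    qed
  qed
  show "successively E (cycle_arc c i m)"
    unfolding cycle_arc_def successively_conv_nth
  proof (intro allI impI)
    fix t assume "Suc t < length (map (\<lambda>t. c ! ((i + t) mod ?L)) [0..<Suc m])"
    then have t: "Suc t < Suc m" by simp
    have "E (c ! ((i + t) mod ?L)) (c ! (Suc ((i + t) mod ?L) mod ?L))"
      using is_cycle_adj[OF cyc] L by simp
    moreover have "Suc ((i + t) mod ?L) mod ?L = (i + Suc t) mod ?L"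
      by (simp add: mod_Suc_eq)
    ultimately show "E (map (\<lambda>t. c ! ((i + t) mod ?L)) [0..<Suc m] ! t)
        (map (\<lambda>t. c ! ((i + t) mod ?L)) [0..<Suc m] ! Suc t)"
      using t by (simp del: upt_Suc)
  qed
  show "set (cycle_arc c i m) \<subseteq> set c" unfolding cycle_arc_def using L by auto
  show "hd (cycle_arc c i m) = c ! i" unfolding cycle_arc_def using i by (simp add: hd_map del: upt_Suc)
  show "last (cycle_arc c i m) = c ! ((i + m) mod ?L)" unfolding cycle_arc_def by (simp add: last_map del: upt_Suc)
  show "length (cycle_arc c i m) = Suc m" unfolding cycle_arc_def by simp
qed

lemma cycle_long_arc:
  assumes cyc: "is_cycle V E c" and i: "i < length c" and j: "j < length c" and ij: "i \<noteq> j"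
    and sym: "\<And>u v. E u v \<Longrightarrow> E v u"
  shows "\<exists>\<alpha>. distinct \<alpha> \<and> set \<alpha> \<subseteq> set c \<and> successively E \<alpha> \<and> hd \<alpha> = c ! i \<and> last \<alpha> = c ! j
      \<and> length c + 2 \<le> 2 * length \<alpha>"
proof -
  let ?L = "length c"
  define k where "k = (j + ?L - i) mod ?L"
  have L0: "0 < ?L" using i by linarith
  have kL: "k < ?L" unfolding k_def using mod_less_divisor[OF L0] by blast
  have ik: "(i + k) mod ?L = j"
  proof -
    have "(i + k) mod ?L = (i + (j + ?L - i)) mod ?L" unfolding k_def by (simp add: mod_add_right_eq)
    also have "i + (j + ?L - i) = j + ?L" using i by simp
    finally show ?thesis using j by simp
  qed
  have k0: "k \<noteq> 0"
  proof
    assume "k = 0"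
    then have "j = i" using ik i by simp
    then show False using ij by simp
  qed
  have jk: "(j + (?L - k)) mod ?L = i"
  proof -
    have "(i + k + (?L - k)) mod ?L = i" using kL i by simp
    then show ?thesis using ik by (metis mod_add_left_eq)
  qed
  have mL: "?L - k < ?L" using k0 kL by simp
  show ?thesis
  proof (cases "?L + 2 \<le> 2 * Suc k")
    case True
    show ?thesis using cycle_arc_props[OF cyc kL i] True ik by (intro exI[of _ "cycle_arc c i k"]) auto
  next
    case False
    let ?a = "rev (cycle_arc c j (?L - k))"
    have "successively E (cycle_arc c j (?L - k))" using cycle_arc_props[OF cyc mL j] by simp
    then have "successively E ?a" by (auto intro: successively_mono sym)
    moreover have "?L + 2 \<le> 2 * length ?a" using cycle_arc_props[OF cyc mL j] False kL by simp
    ultimately show ?thesis using cycle_arc_props[OF cyc mL j] jk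
      by (intro exI[of _ ?a]) (auto simp: hd_rev last_rev)
  qed
qed

lemma successively_subset:
  assumes G: "graph V E" and s: "successively E (x # p)"
  shows "set p \<subseteq> V"
  using s
proof (induction p arbitrary: x)
  case Nil then show ?case by simp
next
  case (Cons y p)
  then have "E x y" "successively E (y # p)" by auto
  then show ?case using Cons.IH G by (auto simp: graph_def)
qed

lemma successively_subset_hd:
  assumes G: "graph V E" and s: "successively E p" and "p \<noteq> []" "hd p \<in> V"
  shows "set p \<subseteq> V"
  using assms successively_subset[OF G, of "hd p" "tl p"] by (cases p) auto

lemma set_tl_subset: "set (tl xs) \<subseteq> set xs"
  by (cases xs) auto

lemma ab_path_length:
  assumes "ab_path E A B p" "A \<inter> B = {}"
  shows "2 \<le> length p"
  using assms by (cases p) (auto simp: ab_path_def Suc_le_eq)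

lemma linked_cycles_glue_distinct:
  assumes dis: "set c \<inter> set d = {}"
    and P: "ab_path E (set c) (set d) P" and Q: "ab_path E (set c) (set d) Q"
    and PQ: "set P \<inter> set Q = {}"
    and \<alpha>: "distinct \<alpha>" "set \<alpha> \<subseteq> set c"
    and \<beta>: "distinct \<beta>" "set \<beta> \<subseteq> set d" "hd \<beta> = last Q" "\<beta> \<noteq> []"
  shows "distinct (\<alpha> @ tl Q @ tl \<beta> @ butlast (tl (rev P)))"
proof -
  have PP: "P \<noteq> []" "distinct P" "\<forall>x\<in>set (tl P). x \<notin> set c" "\<forall>x\<in>set (butlast P). x \<notin> set d"
    using P by (auto simp: ab_path_def)
  have QQ: "Q \<noteq> []" "distinct Q" "\<forall>x\<in>set (tl Q). x \<notin> set c" "\<forall>x\<in>set (butlast Q). x \<notin> set d"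
    using Q by (auto simp: ab_path_def)
  have P_mid: "set (butlast (tl (rev P))) \<subseteq> set (butlast P) \<inter> set (tl P)"
  proof -
    have "tl (rev P) = rev (butlast P)" by (metis butlast_rev rev_rev_ident)
    then have "set (butlast (tl (rev P))) = set (butlast (tl P))" by (simp add: butlast_tl)
    moreover have "set (butlast (tl P)) \<subseteq> set (butlast P)"
      by (metis butlast_tl list.sel(2) list.set_sel(2) subsetI)
    ultimately show ?thesis by (auto dest: in_set_butlastD)
  qed
  have Q_tl: "set (tl Q) \<subseteq> insert (last Q) (set (butlast Q))"
    using set_conv_butlast_last[OF QQ(1)] list.set_sel(2)[OF QQ(1)] by blast
  have \<beta>_tl: "set (tl \<beta>) \<subseteq> set d" "last Q \<notin> set (tl \<beta>)"
    using \<beta> by (cases \<beta>; auto)+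
  have "set (tl Q) \<subseteq> set Q" "set (butlast (tl (rev P))) \<subseteq> set P"
    using set_tl_subset[of Q] P_mid set_tl_subset[of P] by auto
  then have "set (tl Q) \<inter> set (butlast (tl (rev P))) = {}" using PQ by blast
  moreover have "set \<alpha> \<inter> set (tl Q) = {}" "set \<alpha> \<inter> set (tl \<beta>) = {}"
    "set \<alpha> \<inter> set (butlast (tl (rev P))) = {}"
    using \<alpha>(2) QQ(3) \<beta>_tl(1) dis P_mid PP(3) by blast+
  moreover have "set (tl Q) \<inter> set (tl \<beta>) = {}" "set (tl \<beta>) \<inter> set (butlast (tl (rev P))) = {}"
    using Q_tl \<beta>_tl QQ(4) P_mid PP(4) by blast+
  ultimately show ?thesis
    using \<alpha>(1) \<beta>(1) PP(2) QQ(2) by (simp add: distinct_tl distinct_butlast Int_Un_distrib Int_Un_distrib2)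
qed

lemma linked_cycles_glue:
  assumes G: "graph V E" and cV: "set c \<subseteq> V" and dV: "set d \<subseteq> V" and dis: "set c \<inter> set d = {}"
    and P: "ab_path E (set c) (set d) P" and Q: "ab_path E (set c) (set d) Q"
    and PQ: "set P \<inter> set Q = {}"
    and \<alpha>: "distinct \<alpha>" "set \<alpha> \<subseteq> set c" "successively E \<alpha>" "hd \<alpha> = hd P" "last \<alpha> = hd Q" "\<alpha> \<noteq> []"
    and \<beta>: "distinct \<beta>" "set \<beta> \<subseteq> set d" "successively E \<beta>" "hd \<beta> = last Q" "last \<beta> = last P" "\<beta> \<noteq> []"
  shows "is_cycle V E (\<alpha> @ tl Q @ tl \<beta> @ butlast (tl (rev P)))"
    and "length (\<alpha> @ tl Q @ tl \<beta> @ butlast (tl (rev P))) + 4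
      = length \<alpha> + length \<beta> + length P + length Q"
proof -
  define \<gamma> where "\<gamma> = \<alpha> @ tl Q @ tl \<beta> @ butlast (tl (rev P))"
  have sym: "\<And>u v. E u v \<Longrightarrow> E v u" using G by (auto simp: graph_def)
  have PP: "P \<noteq> []" "successively E P" "hd P \<in> set c" "last P \<in> set d"
    using P by (auto simp: ab_path_def)
  have QQ: "Q \<noteq> []" "successively E Q" "hd Q \<in> set c" "last Q \<in> set d"
    using Q by (auto simp: ab_path_def)
  have lP: "2 \<le> length P" and lQ: "2 \<le> length Q"
    using ab_path_length[OF P dis] ab_path_length[OF Q dis] .
  have "hd \<alpha> \<noteq> last \<alpha>" using \<alpha>(4,5) PQ PP(1) QQ(1) by (metis disjoint_iff hd_in_set)
  then have l\<alpha>: "2 \<le> length \<alpha>" using \<alpha>(6) by (cases \<alpha>) (auto simp: Suc_le_eq)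
  show "length \<gamma> + 4 = length \<alpha> + length \<beta> + length P + length Q"
    using lP lQ \<beta>(6) unfolding \<gamma>_def by simp
  have srP: "successively E (rev P)" using PP(2) by (auto intro: successively_mono sym)
  have trP: "tl (rev P) \<noteq> []" using lP by (cases "rev P") auto
  have "successively E (\<beta> @ tl (rev P))"
    by (rule successively_append_tl[OF \<beta>(3) srP \<beta>(6)]) (simp add: \<beta>(5) hd_rev)
  then have "successively E (Q @ tl (\<beta> @ tl (rev P)))"
    by (rule successively_append_tl[OF QQ(2) _ QQ(1)]) (simp add: \<beta>(4,6))
  then have "successively E (\<alpha> @ tl (Q @ tl (\<beta> @ tl (rev P))))"
    by (rule successively_append_tl[OF \<alpha>(3) _ \<alpha>(6)]) (simp add: \<alpha>(5) QQ(1))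
  moreover have "\<alpha> @ tl (Q @ tl (\<beta> @ tl (rev P))) = \<gamma> @ [hd P]"
  proof -
    have "tl (rev P) = butlast (tl (rev P)) @ [hd P]"
      using trP PP(1) by (metis append_butlast_last_id last_rev last_tl)
    then show ?thesis using QQ(1) \<beta>(6) unfolding \<gamma>_def by (cases Q; cases \<beta>) auto
  qed
  ultimately have sW: "successively E (\<gamma> @ [hd P])" by simp
  have "\<gamma> \<noteq> []" "hd \<gamma> = hd P" using \<alpha>(4,6) unfolding \<gamma>_def by auto
  then have "successively E \<gamma>" "E (last \<gamma>) (hd \<gamma>)" using sW by (auto simp: successively_append_iff)
  moreover have "distinct \<gamma>"
    unfolding \<gamma>_def using linked_cycles_glue_distinct[OF dis P Q PQ \<alpha>(1,2) \<beta>(1,2,4,6)] .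
  moreover have "set \<gamma> \<subseteq> V"
  proof -
    have "set P \<subseteq> V" "set Q \<subseteq> V"
      using successively_subset_hd[OF G PP(2,1)] successively_subset_hd[OF G QQ(2,1)] PP(3) QQ(3) cV
      by auto
    moreover have "set (tl \<beta>) \<subseteq> set \<beta>" "set (tl Q) \<subseteq> set Q" "set (butlast (tl (rev P))) \<subseteq> set P"
      using set_tl_subset[of \<beta>] set_tl_subset[of Q] set_tl_subset[of "rev P"]
      by (auto dest: in_set_butlastD)
    ultimately show ?thesis using \<alpha>(2) \<beta>(2) cV dV unfolding \<gamma>_def by auto
  qed
  moreover have "3 \<le> length \<gamma>" using lP lQ l\<alpha> \<beta>(6) unfolding \<gamma>_def by simp
  ultimately show "is_cycle V E \<gamma>" unfolding is_cycle_iff_successively by blast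
qed

lemma linked_cycles_longer_cycle:
  assumes G: "graph V E" and cc: "is_cycle V E c" and cd: "is_cycle V E d"
    and dis: "set c \<inter> set d = {}" and link: "two_linked E (set c) (set d)"
  obtains \<gamma> where "is_cycle V E \<gamma>" "length c + length d + 4 \<le> 2 * length \<gamma>"
proof -
  obtain P Q where P: "ab_path E (set c) (set d) P" and Q: "ab_path E (set c) (set d) Q"
    and PQ: "set P \<inter> set Q = {}"
    using link unfolding two_linked_def by blast
  have sym: "\<And>u v. E u v \<Longrightarrow> E v u" using G by (auto simp: graph_def)
  have ne: "P \<noteq> []" "Q \<noteq> []" using P Q by (auto simp: ab_path_def)
  obtain i j where ij: "i < length c" "c ! i = hd P" "j < length c" "c ! j = hd Q"
    using P Q by (auto simp: ab_path_def in_set_conv_nth)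
  obtain i' j' where ij': "i' < length d" "d ! i' = last P" "j' < length d" "d ! j' = last Q"
    using P Q by (auto simp: ab_path_def in_set_conv_nth)
  have "i \<noteq> j" "j' \<noteq> i'"
    using ij ij' PQ hd_in_set[OF ne(1)] hd_in_set[OF ne(2)] last_in_set[OF ne(1)] last_in_set[OF ne(2)]
    by auto
  obtain \<alpha> where \<alpha>: "distinct \<alpha>" "set \<alpha> \<subseteq> set c" "successively E \<alpha>" "hd \<alpha> = hd P"
    "last \<alpha> = hd Q" "length c + 2 \<le> 2 * length \<alpha>"
    using cycle_long_arc[OF cc ij(1,3) \<open>i \<noteq> j\<close> sym] unfolding ij(2,4) by blast
  obtain \<beta> where \<beta>: "distinct \<beta>" "set \<beta> \<subseteq> set d" "successively E \<beta>" "hd \<beta> = last Q"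
    "last \<beta> = last P" "length d + 2 \<le> 2 * length \<beta>"
    using cycle_long_arc[OF cd ij'(3,1) \<open>j' \<noteq> i'\<close> sym] unfolding ij'(2,4) by blast
  have ne: "\<alpha> \<noteq> []" "\<beta> \<noteq> []" using \<alpha>(6) \<beta>(6) by auto
  have cdV: "set c \<subseteq> V" "set d \<subseteq> V" using cc cd by (auto simp: is_cycle_def)
  note glue = linked_cycles_glue[OF G cdV dis P Q PQ \<alpha>(1-5) ne(1) \<beta>(1-5) ne(2)]
  show ?thesis
  proof (rule that[OF glue(1)])
    show "length c + length d + 4 \<le> 2 * length (\<alpha> @ tl Q @ tl \<beta> @ butlast (tl (rev P)))"
      using glue(2) \<alpha>(6) \<beta>(6) ab_path_length[OF P dis] ab_path_length[OF Q dis] by linarith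
  qed
qed

lemma two_connected_separator_card:
  assumes G: "graph V E" and tc: "two_connected V E" and AV: "A \<subseteq> V" and BV: "B \<subseteq> V"
    and A2: "2 \<le> card A" and B2: "2 \<le> card B" and XV: "X \<subseteq> V" and sep: "separates E A B X"
  shows "2 \<le> card X"
proof (rule ccontr)
  assume "\<not> 2 \<le> card X"
  then have cX: "card X < 2" by simp
  have finX: "finite X" using XV G finite_subset by (auto simp: graph_def)
  have "\<not> A \<subseteq> X" "\<not> B \<subseteq> X"
    using card_mono[OF finX, of A] card_mono[OF finX, of B] A2 B2 cX by auto
  then obtain a b where a: "a \<in> A - X" and b: "b \<in> B - X" by blast
  have "connected_on (V - X) E" using tc XV cX by (simp add: two_connected_def)
  then have "(edges_within E (V - X))\<^sup>*\<^sup>* a b"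
    using a b AV BV unfolding connected_on_iff_edges_within by blast
  then have "(edges_within E (- X))\<^sup>*\<^sup>* a b" by (rule edges_within_rtranclp_mono) auto
  then show False using sep a b unfolding separates_def by blast
qed

lemma longest_cycles_intersect:
  assumes G: "graph V E" and tc: "two_connected V E"
    and lc: "longest_cycle V E c" and ld: "longest_cycle V E d"
  shows "set c \<inter> set d \<noteq> {}"
proof
  assume dis: "set c \<inter> set d = {}"
  have cc: "is_cycle V E c" and cd: "is_cycle V E d" using lc ld by (auto simp: longest_cycle_def)
  have cV: "set c \<subseteq> V" and dV: "set d \<subseteq> V" using cc cd by (auto simp: is_cycle_def)
  have "2 \<le> card (set c)" "2 \<le> card (set d)" using cc cd by (auto simp: is_cycle_def distinct_card)
  then have "two_linked E (set c) (set d)"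
    using menger_two[OF G cV dV] two_connected_separator_card[OF G tc cV dV] by blast
  then obtain \<gamma> where "is_cycle V E \<gamma>" "length c + length d + 4 \<le> 2 * length \<gamma>"
    using linked_cycles_longer_cycle[OF G cc cd dis] by blast
  moreover have "length \<gamma> \<le> length c" "length \<gamma> \<le> length d"
    using lc ld calculation(1) by (auto simp: longest_cycle_def)
  ultimately show False by simp
qed


section \<open>The Helly property of subtrees\<close>

lemma acyclic_path_end_neighbour:
  assumes G: "graph I F" and nc: "\<not> (\<exists>c. is_cycle I F c)"
    and p: "distinct p" "set p \<subseteq> I" "successively F p" and lp: "2 \<le> length p"
    and x: "F (last p) x" "x \<in> set p"
  shows "x = p ! (length p - 2)"
proof (rule ccontr)
  assume xz: "x \<noteq> p ! (length p - 2)"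
  obtain k where k: "k < length p" "p ! k = x" using x(2) by (metis in_set_conv_nth)
  have "x \<noteq> last p" using G x(1) by (auto simp: graph_def)
  moreover have "last p = p ! (length p - 1)" using lp by (intro last_conv_nth) auto
  ultimately have "k \<noteq> length p - 1" using k by auto
  with xz k have kn: "k + 3 \<le> length p" by (cases "k = length p - 2") auto
  have "successively F (drop k p)" using p(3) by (metis append_take_drop_id successively_append_iff)
  moreover have "hd (drop k p) = x" "last (drop k p) = last p" using k kn by (simp_all add: hd_drop_conv_nth)
  ultimately have "is_cycle I F (drop k p)"
    using kn p x(1) unfolding is_cycle_iff_successively by (auto dest: in_set_dropD)
  with nc show False by blast
qed

lemma acyclic_graph_has_leaf:
  assumes G: "graph I F" and nc: "\<not> (\<exists>c. is_cycle I F c)" and ne: "I \<noteq> {}"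
  shows "\<exists>l\<in>I. \<forall>u w. F l u \<longrightarrow> F l w \<longrightarrow> u = w"
proof -
  define P where "P = (\<lambda>p. p \<noteq> [] \<and> distinct p \<and> set p \<subseteq> I \<and> successively F p)"
  have finI: "finite I" using G by (simp add: graph_def)
  obtain v where "v \<in> I" using ne by blast
  then have "P [v]" by (simp add: P_def)
  moreover have "\<forall>p. P p \<longrightarrow> length p < Suc (card I)"
    using distinct_card card_mono[OF finI] unfolding P_def by (metis less_Suc_eq_le)
  ultimately obtain p where p: "P p" and pmax: "\<forall>q. P q \<longrightarrow> length q \<le> length p"
    using ex_has_greatest_nat[of P "[v]" length "Suc (card I)"] by blast
  have pp: "p \<noteq> []" "distinct p" "set p \<subseteq> I" "successively F p" using p by (auto simp: P_def)
  have nbr: "x = p ! (length p - 2)" if x: "F (last p) x" for x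
  proof -
    have "x \<in> set p"
    proof (rule ccontr)
      assume "x \<notin> set p"
      then have "P (p @ [x])" using pp x G by (auto simp: P_def graph_def successively_append_iff)
      then show False using pmax by fastforce
    qed
    moreover have "2 \<le> length p"
    proof (rule ccontr)
      assume "\<not> 2 \<le> length p"
      then have "p = [last p]" using pp(1) by (cases p; cases "tl p") auto
      then have "x = last p" using \<open>x \<in> set p\<close> by (metis empty_iff empty_set set_ConsD)
      then show False using x G by (auto simp: graph_def)
    qed
    ultimately show ?thesis using acyclic_path_end_neighbour[OF G nc pp(2-4)] x by blast
  qed
  show ?thesis using nbr pp(1,3) by (intro bexI[of _ "last p"]) auto
qed

lemma connected_on_Diff_leaf:
  assumes conn: "connected_on T F" and leaf: "\<forall>u w. F l u \<longrightarrow> F l w \<longrightarrow> u = w"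
    and sym: "\<And>u v. F u v \<Longrightarrow> F v u" and irr: "\<And>u. \<not> F u u"
  shows "connected_on (T - {l}) F"
proof -
  let ?R = "edges_within F T" and ?R' = "edges_within F (T - {l})"
  have claim: "(z \<noteq> l \<longrightarrow> ?R'\<^sup>*\<^sup>* x z) \<and> (z = l \<longrightarrow> (\<exists>q. F l q \<and> ?R'\<^sup>*\<^sup>* x q))"
    if r: "?R\<^sup>*\<^sup>* x z" and x: "x \<in> T - {l}" for x z
    using r
  proof (induction rule: rtranclp_induct)
    case base
    then show ?case using x by auto
  next
    case (step z z')
    have st: "F z z'" "z \<in> T" "z' \<in> T" using step(2) by (auto simp: edges_within_def)
    show ?case
    proof (cases "z' = l")
      case True
      then have "z \<noteq> l" using irr st(1) by blast
      then have "?R'\<^sup>*\<^sup>* x z" using step(3) by blast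
      moreover have "F l z" using sym st(1) True by blast
      ultimately show ?thesis using True by blast
    next
      case False
      show ?thesis
      proof (cases "z = l")
        case True
        then obtain q where q: "F l q" "?R'\<^sup>*\<^sup>* x q" using step(3) by blast
        have "q = z'" using leaf q(1) st(1) True by blast
        then show ?thesis using q(2) False by blast
      next
        case zl: False
        then have "?R'\<^sup>*\<^sup>* x z" using step(3) by blast
        moreover have "?R' z z'" using st zl False by (simp add: edges_within_def)
        ultimately show ?thesis using False by (meson rtranclp.rtrancl_into_rtrancl)
      qed
    qed
  qed
  show ?thesis unfolding connected_on_iff_edges_within
  proof (intro ballI)
    fix x y assume "x \<in> T - {l}" "y \<in> T - {l}"
    moreover then have "?R\<^sup>*\<^sup>* x y" using conn by (simp add: connected_on_iff_edges_within)
    ultimately show "?R'\<^sup>*\<^sup>* x y" using claim by blast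
  qed
qed

lemma connected_on_edges_within:
  assumes "W \<subseteq> I'"
  shows "connected_on W (edges_within F I') \<longleftrightarrow> connected_on W F"
proof -
  have "edges_within (edges_within F I') W = edges_within F W" using assms by (auto simp: edges_within_def fun_eq_iff)
  then show ?thesis by (simp add: connected_on_iff_edges_within)
qed

lemma graph_edges_within: "graph V E \<Longrightarrow> W \<subseteq> V \<Longrightarrow> graph W (edges_within E W)"
  unfolding graph_def edges_within_def using finite_subset by blast

lemma acyclic_edges_within:
  assumes "\<not> (\<exists>c. is_cycle I F c)" "W \<subseteq> I"
  shows "\<not> (\<exists>c. is_cycle W (edges_within F W) c)"
  using assms unfolding is_cycle_def edges_within_def by blast

lemma subtree_Diff_leaf:
  assumes G: "graph I F" and leaf: "\<forall>u w. F l u \<longrightarrow> F l w \<longrightarrow> u = w"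
    and T: "T \<noteq> {}" "T \<subseteq> I" "connected_on T F" and Tl: "T \<noteq> {l}"
  shows "T - {l} \<noteq> {}" "T - {l} \<subseteq> I - {l}" "connected_on (T - {l}) (edges_within F (I - {l}))"
proof -
  show "T - {l} \<noteq> {}" "T - {l} \<subseteq> I - {l}" using T Tl by auto
  have "\<And>u v. F u v \<Longrightarrow> F v u" "\<And>u. \<not> F u u" using G by (auto simp: graph_def)
  then have "connected_on (T - {l}) F" by (rule connected_on_Diff_leaf[OF T(3) leaf])
  then show "connected_on (T - {l}) (edges_within F (I - {l}))"
    using connected_on_edges_within[of "T - {l}" "I - {l}" F] T(2) by blast
qed

text \<open>Two subtrees that meet only in the leaf l both contain its unique neighbour.\<close>
lemma subtrees_Diff_leaf_intersect:
  assumes G: "graph I F" and leaf: "\<forall>u w. F l u \<longrightarrow> F l w \<longrightarrow> u = w"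
    and T: "connected_on T1 F" "connected_on T2 F" "T1 \<noteq> {l}" "T2 \<noteq> {l}" "T1 \<inter> T2 \<noteq> {}"
  shows "(T1 - {l}) \<inter> (T2 - {l}) \<noteq> {}"
proof
  assume e: "(T1 - {l}) \<inter> (T2 - {l}) = {}"
  then have lT: "l \<in> T1" "l \<in> T2" using T(5) by blast+
  have nbr: "\<exists>q. F l q \<and> q \<in> T" if T: "connected_on T F" "l \<in> T" "T \<noteq> {l}" for T
  proof -
    obtain x where x: "x \<in> T" "x \<noteq> l" using T(2,3) by blast
    have "(edges_within F T)\<^sup>*\<^sup>* l x" using T x(1) by (simp add: connected_on_iff_edges_within)
    then show ?thesis using x(2)
      by (cases rule: converse_rtranclpE) (auto simp: edges_within_def)
  qed
  obtain q1 q2 where "F l q1" "q1 \<in> T1" "F l q2" "q2 \<in> T2"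
    using nbr[OF T(1) lT(1) T(3)] nbr[OF T(2) lT(2) T(4)] by blast
  moreover then have "q1 = q2" "q1 \<noteq> l" using leaf G by (auto simp: graph_def)
  ultimately show False using e by blast
qed

text \<open>Helly property of subtrees, by deleting a leaf of the forest.\<close>
lemma subtrees_Helly:
  assumes "graph I F" "\<not> (\<exists>c. is_cycle I F c)" "I \<noteq> {}"
    "\<forall>T\<in>\<T>. T \<noteq> {} \<and> T \<subseteq> I \<and> connected_on T F"
    "\<forall>T1\<in>\<T>. \<forall>T2\<in>\<T>. T1 \<inter> T2 \<noteq> {}"
  shows "\<exists>t\<in>I. \<forall>T\<in>\<T>. t \<in> T"
  using assms
proof (induction "card I" arbitrary: I F \<T> rule: less_induct)
  case less
  note G = less.prems(1) and TT = less.prems(4) and PI = less.prems(5)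
  obtain l where lI: "l \<in> I" and leaf: "\<forall>u w. F l u \<longrightarrow> F l w \<longrightarrow> u = w"
    using acyclic_graph_has_leaf[OF less.prems(1-3)] by blast
  show ?case
  proof (cases "{l} \<in> \<T> \<or> I = {l}")
    case trivial: True
    have "l \<in> T" if T: "T \<in> \<T>" for T
    proof (cases "{l} \<in> \<T>")
      case True
      then show ?thesis using PI T by blast
    next
      case False
      then have "I = {l}" using trivial by blast
      then show ?thesis using TT T by blast
    qed
    then show ?thesis using lI by blast
  next
    case False
    have card_less: "card (I - {l}) < card I"
      by (rule card_Diff1_less) (use G lI in \<open>auto simp: graph_def\<close>)
    have sub: "\<forall>T\<in>(\<lambda>T. T - {l}) ` \<T>.
        T \<noteq> {} \<and> T \<subseteq> I - {l} \<and> connected_on T (edges_within F (I - {l}))"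
    proof
      fix T' assume "T' \<in> (\<lambda>T. T - {l}) ` \<T>"
      then obtain T where T: "T \<in> \<T>" "T' = T - {l}" by blast
      then have "T \<noteq> {}" "T \<subseteq> I" "connected_on T F" "T \<noteq> {l}" using TT False by auto
      from subtree_Diff_leaf[OF G leaf this]
      show "T' \<noteq> {} \<and> T' \<subseteq> I - {l} \<and> connected_on T' (edges_within F (I - {l}))"
        unfolding T(2) by simp
    qed
    have meet: "\<forall>T1\<in>(\<lambda>T. T - {l}) ` \<T>. \<forall>T2\<in>(\<lambda>T. T - {l}) ` \<T>. T1 \<inter> T2 \<noteq> {}"
    proof (intro ballI)
      fix T1' T2' assume "T1' \<in> (\<lambda>T. T - {l}) ` \<T>" "T2' \<in> (\<lambda>T. T - {l}) ` \<T>"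
      then obtain T1 T2 where T: "T1 \<in> \<T>" "T2 \<in> \<T>" "T1' = T1 - {l}" "T2' = T2 - {l}" by blast
      then have "connected_on T1 F" "connected_on T2 F" "T1 \<noteq> {l}" "T2 \<noteq> {l}" "T1 \<inter> T2 \<noteq> {}"
        using TT PI False by auto
      from subtrees_Diff_leaf_intersect[OF G leaf this] show "T1' \<inter> T2' \<noteq> {}" unfolding T(3,4) .
    qed
    have "I - {l} \<noteq> {}" using False lI by blast
    from less.hyps[OF card_less graph_edges_within[OF G Diff_subset]
        acyclic_edges_within[OF less.prems(2) Diff_subset] this sub meet]
    obtain t where "t \<in> I - {l}" and t: "\<forall>T\<in>(\<lambda>T. T - {l}) ` \<T>. t \<in> T" by blast
    moreover have "\<forall>T\<in>\<T>. t \<in> T" using t by blast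
    ultimately show ?thesis by blast
  qed
qed

section \<open>Tree decompositions and treewidth\<close>

lemma tree_decomposition_bag_subset:
  assumes "tree_decomposition V E I F B" "t \<in> I"
  shows "B t \<subseteq> V"
  using assms unfolding tree_decomposition_def by blast

lemma tree_decomposition_touching_connected:
  assumes td: "tree_decomposition V E I F B" and CV: "C \<subseteq> V" and conn: "connected_on C E"
  shows "connected_on {t\<in>I. B t \<inter> C \<noteq> {}} F"
proof -
  define TC where "TC = {t\<in>I. B t \<inter> C \<noteq> {}}"
  let ?R = "edges_within F TC"
  have edge: "\<And>u v. E u v \<Longrightarrow> \<exists>t\<in>I. u \<in> B t \<and> v \<in> B t"
    and tv: "\<And>v. v \<in> V \<Longrightarrow> connected_on {t \<in> I. v \<in> B t} F"
    using td unfolding tree_decomposition_def by blast+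
  have lift: "?R\<^sup>*\<^sup>* t t'" if "v \<in> C" "t \<in> I" "v \<in> B t" "t' \<in> I" "v \<in> B t'" for v t t'
  proof -
    have "(edges_within F {t \<in> I. v \<in> B t})\<^sup>*\<^sup>* t t'" using tv[of v] that CV by (auto simp: connected_on_iff_edges_within)
    then show ?thesis by (rule edges_within_rtranclp_mono) (use that in \<open>auto simp: TC_def\<close>)
  qed
  have main: "\<forall>t\<in>I. v \<in> B t \<longrightarrow> ?R\<^sup>*\<^sup>* t1 t"
    if r: "(edges_within E C)\<^sup>*\<^sup>* v1 v" and v1: "v1 \<in> C" "t1 \<in> I" "v1 \<in> B t1" for v1 v t1
    using r
  proof (induction rule: rtranclp_induct)
    case base
    then show ?case using lift v1 by blast
  next
    case (step v w)
    have vw: "E v w" "v \<in> C" "w \<in> C" using step(2) by (auto simp: edges_within_def)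
    obtain t' where t': "t' \<in> I" "v \<in> B t'" "w \<in> B t'" using edge[OF vw(1)] by blast
    have "?R\<^sup>*\<^sup>* t1 t'" using step(3) t' by blast
    then show ?case using lift[OF vw(3) t'(1) t'(3)] by (meson rtranclp_trans)
  qed
  show ?thesis unfolding connected_on_iff_edges_within TC_def[symmetric]
  proof (intro ballI)
    fix t1 t2 assume t: "t1 \<in> TC" "t2 \<in> TC"
    then obtain v1 v2 where v: "v1 \<in> B t1" "v1 \<in> C" "v2 \<in> B t2" "v2 \<in> C" unfolding TC_def by blast
    have "(edges_within E C)\<^sup>*\<^sup>* v1 v2" using conn v by (simp add: connected_on_iff_edges_within)
    then show "?R\<^sup>*\<^sup>* t1 t2" using main v t unfolding TC_def by blast
  qed
qed

lemma tree_decomposition_bag_meets_all: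
  assumes td: "tree_decomposition V E I F B"
    and CC: "\<forall>C\<in>\<C>. C \<noteq> {} \<and> C \<subseteq> V \<and> connected_on C E"
    and PI: "\<forall>C1\<in>\<C>. \<forall>C2\<in>\<C>. C1 \<inter> C2 \<noteq> {}"
  shows "\<exists>t\<in>I. \<forall>C\<in>\<C>. B t \<inter> C \<noteq> {}"
proof -
  have tree: "graph I F" "\<not> (\<exists>c. is_cycle I F c)" "I \<noteq> {}" and U: "(\<Union>t\<in>I. B t) = V"
    using td unfolding tree_decomposition_def is_tree_def by blast+
  define \<T> where "\<T> = (\<lambda>C. {t\<in>I. B t \<inter> C \<noteq> {}}) ` \<C>"
  have h1: "\<forall>T\<in>\<T>. T \<noteq> {} \<and> T \<subseteq> I \<and> connected_on T F"
  proof
    fix T assume "T \<in> \<T>"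
    then obtain C where C: "C \<in> \<C>" "T = {t\<in>I. B t \<inter> C \<noteq> {}}" unfolding \<T>_def by blast
    have "T \<noteq> {}" using C CC U by blast
    moreover have "connected_on T F" using tree_decomposition_touching_connected[OF td] C CC by blast
    ultimately show "T \<noteq> {} \<and> T \<subseteq> I \<and> connected_on T F" using C by blast
  qed
  have h2: "\<forall>T1\<in>\<T>. \<forall>T2\<in>\<T>. T1 \<inter> T2 \<noteq> {}"
  proof (intro ballI)
    fix T1 T2 assume "T1 \<in> \<T>" "T2 \<in> \<T>"
    then obtain C1 C2 where C: "C1 \<in> \<C>" "C2 \<in> \<C>" "T1 = {t\<in>I. B t \<inter> C1 \<noteq> {}}"
      "T2 = {t\<in>I. B t \<inter> C2 \<noteq> {}}" unfolding \<T>_def by blast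
    obtain v where v: "v \<in> C1" "v \<in> C2" using PI C(1,2) by blast
    then have "v \<in> V" using CC C(1) by blast
    then obtain t where "t \<in> I" "v \<in> B t" using U by blast
    then show "T1 \<inter> T2 \<noteq> {}" using C(3,4) v by blast
  qed
  obtain t where t: "t \<in> I" "\<forall>T\<in>\<T>. t \<in> T" using subtrees_Helly[OF tree h1 h2] by blast
  have "\<forall>C\<in>\<C>. B t \<inter> C \<noteq> {}"
  proof
    fix C assume "C \<in> \<C>"
    then have "{t\<in>I. B t \<inter> C \<noteq> {}} \<in> \<T>" unfolding \<T>_def by blast
    then have "t \<in> {t\<in>I. B t \<inter> C \<noteq> {}}" by (rule bspec[OF t(2)])
    then show "B t \<inter> C \<noteq> {}" by simp
  qed
  then show ?thesis using t(1) by blast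
qed

lemma is_cycle_connected_on:
  assumes G: "graph V E" and c: "is_cycle V E c"
  shows "connected_on (set c) E"
proof -
  have sym: "\<And>u v. E u v \<Longrightarrow> E v u" using G by (auto simp: graph_def)
  have cc: "c \<noteq> []" "successively E c" using c by (auto simp: is_cycle_iff_successively)
  have s: "successively (edges_within E (set c)) c" using cc(2) by (rule successively_edges_within) simp
  have h: "(edges_within E (set c))\<^sup>*\<^sup>* (hd c) x" if "x \<in> set c" for x
    using successively_rtranclp_hd[OF s cc(1) that] .
  show ?thesis unfolding connected_on_iff_edges_within
  proof (intro ballI)
    fix u v assume "u \<in> set c" "v \<in> set c"
    then have "(edges_within E (set c))\<^sup>*\<^sup>* u (hd c)" "(edges_within E (set c))\<^sup>*\<^sup>* (hd c) v"
      using h edges_within_rtranclp_sym[of E, OF sym] by blast+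
    then show "(edges_within E (set c))\<^sup>*\<^sup>* u v" by (rule rtranclp_trans)
  qed
qed

lemma lct_le_card:
  assumes "S \<subseteq> V" "\<forall>c. longest_cycle V E c \<longrightarrow> set c \<inter> S \<noteq> {}"
  shows "lct V E \<le> card S"
  unfolding lct_def by (rule Least_le) (use assms in blast)

lemma lct_le_some_bag:
  assumes G: "graph V E" and tc: "two_connected V E" and td: "tree_decomposition V E I F B"
  shows "\<exists>t\<in>I. lct V E \<le> card (B t)"
proof -
  define \<C> where "\<C> = set ` {c. longest_cycle V E c}"
  have CC: "\<forall>C\<in>\<C>. C \<noteq> {} \<and> C \<subseteq> V \<and> connected_on C E"
  proof
    fix C assume "C \<in> \<C>"
    then obtain c where c: "longest_cycle V E c" "C = set c" unfolding \<C>_def by blast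
    then have ic: "is_cycle V E c" by (simp add: longest_cycle_def)
    then have "C \<noteq> {}" "C \<subseteq> V" using c(2) by (auto simp: is_cycle_def)
    moreover have "connected_on C E" using is_cycle_connected_on[OF G ic] c(2) by simp
    ultimately show "C \<noteq> {} \<and> C \<subseteq> V \<and> connected_on C E" by blast
  qed
  have PI: "\<forall>C1\<in>\<C>. \<forall>C2\<in>\<C>. C1 \<inter> C2 \<noteq> {}"
    unfolding \<C>_def using longest_cycles_intersect[OF G tc] by blast
  obtain t where t: "t \<in> I" "\<forall>C\<in>\<C>. B t \<inter> C \<noteq> {}" using tree_decomposition_bag_meets_all[OF td CC PI] by blast
  have "\<forall>c. longest_cycle V E c \<longrightarrow> set c \<inter> B t \<noteq> {}"
    using t(2) unfolding \<C>_def by blast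
  then have "lct V E \<le> card (B t)" using lct_le_card tree_decomposition_bag_subset[OF td t(1)] by blast
  then show ?thesis using t(1) by blast
qed

lemma tree_decomposition_single_bag:
  assumes G: "graph V E"
  shows "tree_decomposition V E {0::nat} (\<lambda>_ _. False) (\<lambda>_. V)"
proof -
  have nc: "\<not> (\<exists>c. is_cycle {0::nat} (\<lambda>_ _. False) c)"
    by (auto simp: is_cycle_iff_successively successively_Cons)
  show ?thesis unfolding tree_decomposition_def is_tree_def
    using nc G by (auto simp: graph_def connected_on_def)
qed

lemma treewidth_decomposition:
  assumes G: "graph V E"
  obtains I :: "nat set" and F B where "tree_decomposition V E I F B"
    "treewidth V E = Max ((\<lambda>t. card (B t)) ` I) - 1"
proof -
  let ?P = "\<lambda>k. \<exists>(I :: nat set) F B. tree_decomposition V E I F B \<and> k = Max ((\<lambda>t. card (B t)) ` I) - 1"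
  have "?P (Max ((\<lambda>t. card ((\<lambda>_. V) t)) ` {0::nat}) - 1)" using tree_decomposition_single_bag[OF G] by blast
  then have "?P (LEAST k. ?P k)" by (rule LeastI)
  then show ?thesis using that unfolding treewidth_def by blast
qed

lemma lct_le_treewidth:
  assumes G: "graph V E" and tc: "two_connected V E"
  shows "lct V E \<le> treewidth V E + 1"
proof -
  obtain I :: "nat set" and F B where td: "tree_decomposition V E I F B"
    and tw: "treewidth V E = Max ((\<lambda>t. card (B t)) ` I) - 1"
    using treewidth_decomposition[OF G] by blast
  obtain t where t: "t \<in> I" "lct V E \<le> card (B t)" using lct_le_some_bag[OF G tc td] by blast
  have "finite I" using td by (simp add: tree_decomposition_def is_tree_def graph_def)
  then have "card (B t) \<le> Max ((\<lambda>t. card (B t)) ` I)" using t(1) by simp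
  then show ?thesis using t(2) tw by linarith
qed

section \<open>Chordal graphs\<close>

definition chordless :: "('a \<Rightarrow> 'a \<Rightarrow> bool) \<Rightarrow> 'a list \<Rightarrow> bool" where
  "chordless E p \<longleftrightarrow> (\<forall>i j. i < length p \<longrightarrow> j < length p \<longrightarrow> E (p!i) (p!j) \<longrightarrow> j = Suc i \<or> i = Suc j)"

definition path_via :: "('a \<Rightarrow> 'a \<Rightarrow> bool) \<Rightarrow> 'a set \<Rightarrow> 'a \<Rightarrow> 'a \<Rightarrow> 'a list \<Rightarrow> bool" where
  "path_via E C x y p \<longleftrightarrow> 3 \<le> length p \<and> hd p = x \<and> last p = y \<and> distinct p \<and>
     set p \<subseteq> insert x (insert y C) \<and> successively E p"

lemma shortest_path_via_no_shortcut:
  assumes nxy: "\<not> E x y" and tp: "path_via E C x y p" and min: "\<forall>p'. path_via E C x y p' \<longrightarrow> length p \<le> length p'"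
    and ij: "i < j" "j < length p" and e: "E (p!i) (p!j)"
  shows "j = Suc i"
proof (rule ccontr)
  assume nj: "j \<noteq> Suc i"
  then have j2: "Suc (Suc i) \<le> j" using ij by simp
  have T: "3 \<le> length p" "hd p = x" "last p = y" "distinct p" "set p \<subseteq> insert x (insert y C)"
    "successively E p" using tp by (auto simp: path_via_def)
  have pne: "p \<noteq> []" using T(1) by auto
  show False
  proof (cases "i = 0 \<and> j = length p - 1")
    case True
    then have "p!i = x" "p!j = y" using T(2,3) pne by (auto simp: hd_conv_nth last_conv_nth)
    then show False using e nxy by simp
  next
    case False
    define p' where "p' = take (Suc i) p @ drop j p"
    have lp': "length p' = Suc i + (length p - j)" unfolding p'_def using ij by simp
    have "3 \<le> length p'" using False lp' ij j2 by auto
    moreover have "hd p' = x" unfolding p'_def using T(2) pne by (cases p) auto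
    moreover have "last p' = y" unfolding p'_def using T(3) ij by simp
    moreover have "distinct p'"
    proof -
      have "set (take (Suc i) p) \<inter> set (drop j p) = {}"
        using set_take_disj_set_drop_if_distinct[OF T(4)] ij by simp
      then show ?thesis unfolding p'_def using T(4) by (simp only: distinct_append distinct_take distinct_drop)
    qed
    moreover have "set p' \<subseteq> insert x (insert y C)"
    proof -
      have "set p' \<subseteq> set p" unfolding p'_def using set_take_subset set_drop_subset by (metis Un_subset_iff set_append)
      then show ?thesis using T(5) by blast
    qed
    moreover have "successively E p'"
    proof -
      have "successively E (take (Suc i) p @ drop (Suc i) p)" using T(6) by simp
      then have s1: "successively E (take (Suc i) p)" by (simp only: successively_append_iff)
      have "successively E (take j p @ drop j p)" using T(6) by simp
      then have s2: "successively E (drop j p)" by (simp only: successively_append_iff)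
      have "last (take (Suc i) p) = p ! i" using ij by (simp add: take_Suc_conv_app_nth)
      moreover have "hd (drop j p) = p ! j" using ij by (simp add: hd_drop_conv_nth)
      ultimately show ?thesis unfolding p'_def using s1 s2 e by (simp add: successively_append_iff)
    qed
    ultimately have "path_via E C x y p'" by (simp add: path_via_def)
    moreover have "length p' < length p" using lp' j2 ij by simp
    ultimately show False using min by fastforce
  qed
qed

lemma shortest_path_via_chordless:
  assumes sym: "\<And>u v. E u v \<Longrightarrow> E v u" and irr: "\<And>u. \<not> E u u"
    and nxy: "\<not> E x y" and tp: "path_via E C x y p" and min: "\<forall>p'. path_via E C x y p' \<longrightarrow> length p \<le> length p'"
  shows "chordless E p"
  unfolding chordless_def
proof (intro allI impI)
  fix i j assume i: "i < length p" and j: "j < length p" and e: "E (p!i) (p!j)"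
  consider "i < j" | "i = j" | "j < i" by linarith
  then show "j = Suc i \<or> i = Suc j"
  proof cases
    case 1 then show ?thesis using shortest_path_via_no_shortcut[OF nxy tp min 1 j e] by simp
  next
    case 2 then show ?thesis using e irr by simp
  next
    case 3 then show ?thesis using shortest_path_via_no_shortcut[OF nxy tp min 3 i sym[OF e]] by simp
  qed
qed

lemma path_via_inner:
  assumes "path_via E C x y p" "0 < k" "k < length p - 1"
  shows "p ! k \<in> C"
proof -
  have T: "3 \<le> length p" "hd p = x" "last p = y" "distinct p" "set p \<subseteq> insert x (insert y C)"
    using assms(1) by (auto simp: path_via_def)
  have pne: "p \<noteq> []" using T(1) by auto
  have k1: "k < length p" "0 < length p" "length p - 1 < length p" using assms(3) by auto
  have "p ! k \<noteq> p ! 0" using nth_eq_iff_index_eq[OF T(4) k1(1) k1(2)] assms(2) by simp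
  moreover have "p ! k \<noteq> p ! (length p - 1)" using nth_eq_iff_index_eq[OF T(4) k1(1) k1(3)] assms(3) by simp
  moreover have "p ! 0 = x" "p ! (length p - 1) = y" using T(2,3) pne by (auto simp: hd_conv_nth last_conv_nth)
  moreover have "p ! k \<in> set p" using assms(3) by simp
  ultimately show ?thesis using T(5) by auto
qed

lemma nth_append_butlast_tl_rev:
  assumes "length p \<le> k" "k < length p + length r - 2"
  shows "(p @ butlast (tl (rev r))) ! k = r ! (length p + length r - 2 - k)"
proof -
  have "(p @ butlast (tl (rev r))) ! k = butlast (tl (rev r)) ! (k - length p)"
    using assms(1) by (simp add: nth_append)
  also have "\<dots> = rev r ! Suc (k - length p)" using assms by (simp add: nth_butlast nth_tl)
  also have "\<dots> = r ! (length r - 1 - Suc (k - length p))" using assms by (simp add: rev_nth)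
  also have "length r - 1 - Suc (k - length p) = length p + length r - 2 - k" using assms by linarith
  finally show ?thesis .
qed

lemma chordless_paths_cross_edge:
  assumes tp: "path_via E Ca x y p" and tr: "path_via E Cb x y r" and cr: "chordless E r"
    and noE: "\<forall>u\<in>Ca. \<forall>w\<in>Cb. \<not> E u w"
    and i: "i < length p" and t: "0 < t" "t < length r - 1" and e: "E (p ! i) (r ! t)"
  shows "(i = 0 \<and> t = 1) \<or> (i = length p - 1 \<and> t = length r - 2)"
proof -
  have P: "3 \<le> length p" "hd p = x" "last p = y" using tp by (auto simp: path_via_def)
  have R: "3 \<le> length r" "hd r = x" "last r = y" using tr by (auto simp: path_via_def)
  have ne: "p \<noteq> []" "r \<noteq> []" using P(1) R(1) by auto
  have ends: "p ! 0 = r ! 0" "p ! (length p - 1) = r ! (length r - 1)"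
    using P R hd_conv_nth[OF ne(1)] hd_conv_nth[OF ne(2)] last_conv_nth[OF ne(1)] last_conv_nth[OF ne(2)]
    by simp_all
  consider "i = 0" | "i = length p - 1" | "0 < i \<and> i < length p - 1" using i by linarith
  then show ?thesis
  proof cases
    case 1
    then have "E (r ! 0) (r ! t)" using e ends by simp
    then show ?thesis using cr t 1 unfolding chordless_def by fastforce
  next
    case 2
    then have "E (r ! (length r - 1)) (r ! t)" using e ends by simp
    then have "t = Suc (length r - 1) \<or> length r - 1 = Suc t"
      using cr[unfolded chordless_def, rule_format, of "length r - 1" t] t by simp
    then show ?thesis using t 2 by auto
  next
    case 3
    then show ?thesis using path_via_inner[OF tp] path_via_inner[OF tr t] noE e by blast
  qed
qed

lemma chordless_paths_cycle:
  assumes G: "graph V E" and tp: "path_via E Ca x y p" and tr: "path_via E Cb x y r"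
    and dis: "Ca \<inter> Cb = {}" and xy: "x \<notin> Cb" "y \<notin> Cb"
    and pV: "set p \<subseteq> V" and rV: "set r \<subseteq> V"
  shows "is_cycle V E (p @ butlast (tl (rev r)))"
proof -
  define mid where "mid = butlast (tl (rev r))"
  have P: "3 \<le> length p" "hd p = x" "last p = y" "distinct p" "set p \<subseteq> insert x (insert y Ca)"
    "successively E p" using tp by (auto simp: path_via_def)
  have R: "3 \<le> length r" "hd r = x" "last r = y" "distinct r" "successively E r"
    using tr by (auto simp: path_via_def)
  have midCb: "set mid \<subseteq> Cb"
  proof
    fix z assume "z \<in> set mid"
    then obtain t where t: "t < length mid" "mid ! t = z" by (metis in_set_conv_nth)
    then have "t < length r - 2" "z = r ! (length r - 2 - t)"
      using nth_append_butlast_tl_rev[of "[]" t r] by (simp_all add: mid_def)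
    then show "z \<in> Cb" using path_via_inner[OF tr, of "length r - 2 - t"] by simp
  qed
  have "set mid \<subseteq> set r" using set_tl_subset[of "rev r"] by (auto simp: mid_def dest: in_set_butlastD)
  moreover have "distinct mid" unfolding mid_def using R(4) by (simp add: distinct_butlast distinct_tl)
  ultimately have dc: "distinct (p @ mid)" and cV: "set (p @ mid) \<subseteq> V"
    using P(4,5) midCb dis xy pV rV by auto
  have trr: "tl (rev r) \<noteq> []" using R(1) by (cases "rev r") auto
  have "p @ tl (rev r) = (p @ mid) @ [x]"
  proof -
    have "tl (rev r) = butlast (tl (rev r)) @ [last (tl (rev r))]" using trr by simp
    moreover have "last (tl (rev r)) = x" using trr R(1,2) by (simp add: last_tl last_rev)
    ultimately show ?thesis unfolding mid_def by (metis append.assoc)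
  qed
  moreover have "successively E (p @ tl (rev r))"
  proof (rule successively_append_tl[OF P(6)])
    show "successively E (rev r)" using R(5) G by (auto simp: graph_def intro: successively_mono)
    show "p \<noteq> []" "last p = hd (rev r)" using P(1,3) R(3) by (auto simp: hd_rev)
  qed
  ultimately have "successively E ((p @ mid) @ [x])" by simp
  then have "successively E (p @ mid)" "E (last (p @ mid)) x"
    unfolding successively_append_iff[of E "p @ mid" "[x]"] using P(1) by auto
  moreover have "hd (p @ mid) = x" using P(1,2) by (cases p) auto
  ultimately have "successively E (p @ mid)" "E (last (p @ mid)) (hd (p @ mid))" by simp_all
  then show ?thesis
    unfolding mid_def[symmetric] is_cycle_iff_successively using dc cV P(1) by simp
qed

lemma chordless_paths_induced_cycle:
  assumes G: "graph V E"
    and tp: "path_via E Ca x y p" and tr: "path_via E Cb x y r"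
    and cp: "chordless E p" and cr: "chordless E r"
    and dis: "Ca \<inter> Cb = {}" and xy: "x \<notin> Cb" "y \<notin> Cb"
    and noE: "\<forall>u\<in>Ca. \<forall>w\<in>Cb. \<not> E u w"
    and pV: "set p \<subseteq> V" and rV: "set r \<subseteq> V"
  shows "induced_cycle V E (p @ butlast (tl (rev r))) \<and> 4 \<le> length (p @ butlast (tl (rev r)))"
proof -
  define c where "c = p @ butlast (tl (rev r))"
  define m where "m = length p"
  define L where "L = length p + length r - 2"
  have sym: "\<And>u v. E u v \<Longrightarrow> E v u" using G by (auto simp: graph_def)
  have lens: "3 \<le> m" "3 \<le> length r" using tp tr by (auto simp: path_via_def m_def)
  have lc: "length c = L" and L4: "4 \<le> L" using lens unfolding c_def L_def m_def by auto
  have c1: "c ! k = p ! k" if "k < m" for k using that by (simp add: c_def m_def nth_append)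
  have c2: "c ! k = r ! (L - k)" if "m \<le> k" "k < L" for k
    using nth_append_butlast_tl_rev[of p k r] that by (simp add: c_def L_def m_def)
  have cross: "(i = 0 \<and> j = L - 1) \<or> j = Suc i"
    if ij: "i < m" "m \<le> j" "j < L" and e: "E (c ! i) (c ! j)" for i j
  proof -
    have "0 < L - j" "L - j < length r - 1" using ij lens by (auto simp: L_def m_def)
    moreover have "E (p ! i) (r ! (L - j))" using e c1 c2 ij by simp
    ultimately have "(i = 0 \<and> L - j = 1) \<or> (i = m - 1 \<and> L - j = length r - 2)"
      using chordless_paths_cross_edge[OF tp tr cr noE] ij(1) unfolding m_def by blast
    then show ?thesis using ij lens by (auto simp: L_def m_def)
  qed
  have "j = (i + 1) mod L \<or> i = (j + 1) mod L"
    if ij: "i < L" "j < L" and e: "E (c ! i) (c ! j)" for i j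
  proof -
    have "(i = 0 \<and> j = L - 1) \<or> (j = 0 \<and> i = L - 1) \<or> j = Suc i \<or> i = Suc j"
    proof (cases "i < m"; cases "j < m")
      assume "i < m" "j < m"
      then show ?thesis using e c1 cp unfolding chordless_def m_def by auto
    next
      assume "\<not> i < m" "\<not> j < m"
      then have "E (r ! (L - i)) (r ! (L - j))" using e c2 ij by simp
      moreover have "L - i < length r" "L - j < length r"
        using ij lens \<open>\<not> i < m\<close> \<open>\<not> j < m\<close> by (auto simp: L_def m_def)
      ultimately show ?thesis using cr ij unfolding chordless_def by fastforce
    qed (use cross ij e sym in \<open>auto simp: not_less\<close>)
    then show ?thesis using ij L4 by auto
  qed
  moreover have "is_cycle V E c"
    unfolding c_def by (rule chordless_paths_cycle[OF G tp tr dis xy pV rV])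
  ultimately show ?thesis using lc L4 unfolding c_def[symmetric] induced_cycle_def by simp
qed

definition component :: "'a set \<Rightarrow> ('a \<Rightarrow> 'a \<Rightarrow> bool) \<Rightarrow> 'a set \<Rightarrow> 'a \<Rightarrow> 'a set" where
  "component V E S a = {v. (edges_within E (V - S))\<^sup>*\<^sup>* a v}"

lemma component_closed:
  assumes "v \<in> component V E S a" "w \<in> V - S" "E v w" "a \<in> V - S"
  shows "w \<in> component V E S a"
proof -
  have "v = a \<or> v \<in> V - S" using assms(1) edges_within_rtranclp_cases unfolding component_def by fastforce
  then have "v \<in> V - S" using assms(4) by blast
  then have "edges_within E (V - S) v w" using assms(2,3) by (simp add: edges_within_def)
  then show ?thesis using assms(1) unfolding component_def by (simp add: rtranclp.rtrancl_into_rtrancl)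
qed

lemma component_subset:
  assumes "a \<in> V - S"
  shows "component V E S a \<subseteq> V - S"
  using assms edges_within_rtranclp_cases unfolding component_def by fastforce

lemma component_connected:
  assumes "(edges_within E (V - S))\<^sup>*\<^sup>* a v" "a \<in> V - S"
  shows "(edges_within E (component V E S a))\<^sup>*\<^sup>* a v"
  using assms(1)
proof (induction rule: rtranclp_induct)
  case base then show ?case by simp
next
  case (step v w)
  have "v \<in> component V E S a" "w \<in> component V E S a"
    using step(1) step(1)[THEN rtranclp.rtrancl_into_rtrancl, OF step(2)] unfolding component_def by auto
  then have "edges_within E (component V E S a) v w" using step(2) by (simp add: edges_within_def)
  then show ?case using step(3) by (simp add: rtranclp.rtrancl_into_rtrancl)
qed

lemma successively_edges_within_subset:
  assumes "successively (edges_within E W) p" "p \<noteq> []" "hd p \<in> W"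
  shows "set p \<subseteq> W"
proof
  fix v assume "v \<in> set p"
  then have "(edges_within E W)\<^sup>*\<^sup>* (hd p) v" using successively_rtranclp_hd[OF assms(1,2)] by blast
  then show "v \<in> W" using edges_within_rtranclp_cases assms(3) by fastforce
qed

lemma separator_vertex_neighbour:
  assumes G: "graph V E" and a: "a \<in> V - S" and sepS: "\<not> (edges_within E (V - S))\<^sup>*\<^sup>* a b"
    and nsep: "(edges_within E (V - (S - {x})))\<^sup>*\<^sup>* a b" and x: "x \<in> S"
  shows "\<exists>u. E x u \<and> u \<in> component V E S a"
proof (rule ccontr)
  assume nn: "\<not> (\<exists>u. E x u \<and> u \<in> component V E S a)"
  have sym: "\<And>u v. E u v \<Longrightarrow> E v u" using G by (auto simp: graph_def)
  have cl: "w \<in> component V E S a" if v: "v \<in> component V E S a" and st: "edges_within E (V - (S - {x})) v w" for v w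
  proof -
    have "E v w" "w \<in> V" "w \<notin> S - {x}" using st by (auto simp: edges_within_def)
    moreover have "w \<noteq> x" using nn v sym calculation(1) by blast
    ultimately show ?thesis using component_closed[OF v _ _ a] by blast
  qed
  have aC: "a \<in> component V E S a" unfolding component_def by simp
  have "b \<in> component V E S a"
    by (rule rtranclp_closed_mem[of "component V E S a" "edges_within E (V - (S - {x}))" a b, OF cl aC nsep])
  then show False using sepS unfolding component_def by simp
qed

lemma chordless_path_via:
  assumes G: "graph V E" and xy: "x \<notin> C" "y \<notin> C" "x \<noteq> y" "\<not> E x y"
    and xa: "E x xa" "xa \<in> C" and ya: "E ya y" "ya \<in> C" and r: "(edges_within E C)\<^sup>*\<^sup>* xa ya"
  shows "\<exists>p. path_via E C x y p \<and> chordless E p"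
proof -
  have sym: "\<And>u v. E u v \<Longrightarrow> E v u" and irr: "\<And>u. \<not> E u u" using G by (auto simp: graph_def)
  obtain q where q: "q \<noteq> []" "hd q = xa" "last q = ya" "successively (edges_within E C) q" "distinct q"
    using rtranclp_distinct_path[OF r] by blast
  have qC: "set q \<subseteq> C" using successively_edges_within_subset[OF q(4,1)] q(2) xa(2) by simp
  have sq: "successively E q" using q(4) by (auto simp: edges_within_def intro: successively_mono)
  define p0 where "p0 = x # q @ [y]"
  have "path_via E C x y p0" unfolding path_via_def p0_def
  proof (intro conjI)
    show "3 \<le> length (x # q @ [y])" using q(1) by (cases q) auto
    show "distinct (x # q @ [y])" using q(5) qC xy by auto
    show "set (x # q @ [y]) \<subseteq> insert x (insert y C)" using qC by auto
    show "successively E (x # q @ [y])"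
      using sq q(1,2,3) xa(1) ya(1) by (auto simp: successively_append_iff successively_Cons)
  qed simp_all
  then obtain p where p: "path_via E C x y p" "\<forall>p'. path_via E C x y p' \<longrightarrow> length p \<le> length p'"
    using ex_has_least_nat[of "path_via E C x y" p0 length] by blast
  then show ?thesis using shortest_path_via_chordless[OF sym irr xy(4) p(1) p(2)] by blast
qed

lemma minimal_separator_exists:
  assumes G: "graph V E" and ab: "a \<in> V" "b \<in> V" "a \<noteq> b" "\<not> E a b"
  obtains S where "S \<subseteq> V - {a, b}" "\<not> (edges_within E (V - S))\<^sup>*\<^sup>* a b"
    "\<forall>S'. S' \<subseteq> V - {a, b} \<longrightarrow> \<not> (edges_within E (V - S'))\<^sup>*\<^sup>* a b \<longrightarrow> card S \<le> card S'"
proof -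
  define Sp where "Sp = (\<lambda>S. S \<subseteq> V - {a, b} \<and> \<not> (edges_within E (V - S))\<^sup>*\<^sup>* a b)"
  have "\<not> (edges_within E {a, b})\<^sup>*\<^sup>* a b"
  proof
    assume r: "(edges_within E {a, b})\<^sup>*\<^sup>* a b"
    have "w \<in> {a}" if "v \<in> {a}" "edges_within E {a, b} v w" for v w
      using that ab(4) G by (auto simp: edges_within_def graph_def)
    then have "b \<in> {a}" using rtranclp_closed_mem[of "{a}", OF _ _ r] by blast
    then show False using ab(3) by simp
  qed
  moreover have "V - (V - {a, b}) = {a, b}" using ab by auto
  ultimately have "Sp (V - {a, b})" by (simp add: Sp_def)
  then obtain S where S: "Sp S" and min: "\<forall>S'. Sp S' \<longrightarrow> card S \<le> card S'"
    using ex_has_least_nat[of Sp "V - {a, b}" card] by blast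
  show ?thesis by (rule that[of S]) (use S min in \<open>simp_all add: Sp_def\<close>)
qed

lemma minimal_separator_clique:
  assumes G: "graph V E" and ch: "chordal V E" and ab: "a \<in> V" "b \<in> V"
    and SV: "S \<subseteq> V - {a, b}" and sepS: "\<not> (edges_within E (V - S))\<^sup>*\<^sup>* a b"
    and min: "\<forall>S'. S' \<subseteq> V - {a, b} \<longrightarrow> \<not> (edges_within E (V - S'))\<^sup>*\<^sup>* a b \<longrightarrow> card S \<le> card S'"
    and x: "x \<in> S" and y: "y \<in> S" and xy: "x \<noteq> y"
  shows "E x y"
proof (rule ccontr)
  assume nxy: "\<not> E x y"
  have sym: "\<And>u v. E u v \<Longrightarrow> E v u" using G by (auto simp: graph_def)
  have finV: "finite V" using G by (simp add: graph_def)
  have aS: "a \<in> V - S" and bS: "b \<in> V - S" using ab SV by auto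
  define Ca where "Ca = component V E S a"
  define Cb where "Cb = component V E S b"
  have sepS': "\<not> (edges_within E (V - S))\<^sup>*\<^sup>* b a" using sepS edges_within_rtranclp_sym[of E, OF sym] by blast
  have CaS: "Ca \<subseteq> V - S" unfolding Ca_def by (rule component_subset[OF aS])
  have CbS: "Cb \<subseteq> V - S" unfolding Cb_def by (rule component_subset[OF bS])
  have dis: "Ca \<inter> Cb = {}"
  proof (rule ccontr)
    assume "Ca \<inter> Cb \<noteq> {}"
    then obtain v where "(edges_within E (V - S))\<^sup>*\<^sup>* a v" "(edges_within E (V - S))\<^sup>*\<^sup>* b v" unfolding Ca_def Cb_def component_def by blast
    then show False using sepS edges_within_rtranclp_sym[of E, OF sym] by (meson rtranclp_trans)
  qed
  have noE: "\<forall>u\<in>Ca. \<forall>w\<in>Cb. \<not> E u w"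
  proof (intro ballI notI)
    fix u w assume "u \<in> Ca" "w \<in> Cb" "E u w"
    then have "w \<in> Ca" unfolding Ca_def using component_closed[OF _ _ _ aS] CbS by blast
    then show False using dis \<open>w \<in> Cb\<close> by blast
  qed
  have nonsep: "(edges_within E (V - (S - {z})))\<^sup>*\<^sup>* a b" if z: "z \<in> S" for z
  proof (rule ccontr)
    assume "\<not> (edges_within E (V - (S - {z})))\<^sup>*\<^sup>* a b"
    moreover have "S - {z} \<subseteq> V - {a, b}" using SV by blast
    ultimately have "card S \<le> card (S - {z})" using min by blast
    moreover have "finite S" using SV finV finite_subset by blast
    moreover have "0 < card S" using calculation(2) z card_gt_0_iff by blast
    ultimately show False using z by simp
  qed
  have nonsep': "(edges_within E (V - (S - {z})))\<^sup>*\<^sup>* b a" if z: "z \<in> S" for z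
    using nonsep[OF z] edges_within_rtranclp_sym[of E, OF sym] by blast
  obtain xa where xa: "E x xa" "xa \<in> Ca" using separator_vertex_neighbour[OF G aS sepS nonsep[OF x] x] Ca_def by blast
  obtain ya where ya: "E y ya" "ya \<in> Ca" using separator_vertex_neighbour[OF G aS sepS nonsep[OF y] y] Ca_def by blast
  obtain xb where xb: "E x xb" "xb \<in> Cb" using separator_vertex_neighbour[OF G bS sepS' nonsep'[OF x] x] Cb_def by blast
  obtain yb where yb: "E y yb" "yb \<in> Cb" using separator_vertex_neighbour[OF G bS sepS' nonsep'[OF y] y] Cb_def by blast
  have conn: "(edges_within E C)\<^sup>*\<^sup>* u w" if "C = component V E S c" "c \<in> V - S" "u \<in> C" "w \<in> C" for C c u w
  proof -
    have "(edges_within E (V - S))\<^sup>*\<^sup>* c u" "(edges_within E (V - S))\<^sup>*\<^sup>* c w" using that unfolding component_def by auto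
    then have "(edges_within E C)\<^sup>*\<^sup>* c u" "(edges_within E C)\<^sup>*\<^sup>* c w" using component_connected[OF _ that(2)] that(1) by auto
    then show ?thesis using edges_within_rtranclp_sym[of E, OF sym] by (meson rtranclp_trans)
  qed
  have xyC: "x \<notin> Ca" "y \<notin> Ca" "x \<notin> Cb" "y \<notin> Cb" using CaS CbS x y by auto
  obtain p where p: "path_via E Ca x y p" "chordless E p"
    using chordless_path_via[OF G xyC(1,2) xy nxy xa sym[OF ya(1)] ya(2) conn[OF Ca_def aS xa(2) ya(2)]] by blast
  obtain r where r: "path_via E Cb x y r" "chordless E r"
    using chordless_path_via[OF G xyC(3,4) xy nxy xb sym[OF yb(1)] yb(2) conn[OF Cb_def bS xb(2) yb(2)]] by blast
  have pV: "set p \<subseteq> V" using p(1) CaS x y SV unfolding path_via_def by blast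
  have rV: "set r \<subseteq> V" using r(1) CbS x y SV unfolding path_via_def by blast
  have "induced_cycle V E (p @ butlast (tl (rev r))) \<and> 4 \<le> length (p @ butlast (tl (rev r)))"
    using chordless_paths_induced_cycle[OF G p(1) r(1) p(2) r(2) dis xyC(3,4) noE pV rV] .
  then show False using ch unfolding chordal_def by fastforce
qed

definition simplicial :: "'a set \<Rightarrow> ('a \<Rightarrow> 'a \<Rightarrow> bool) \<Rightarrow> 'a \<Rightarrow> bool" where
  "simplicial V E v \<longleftrightarrow> v \<in> V \<and> (\<forall>u w. E v u \<longrightarrow> E v w \<longrightarrow> u \<noteq> w \<longrightarrow> E u w)"

lemma chordal_edges_within:
  assumes ch: "chordal V E" and WV: "W \<subseteq> V"
  shows "chordal W (edges_within E W)"
  unfolding chordal_def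
proof (intro allI impI)
  fix c assume ic: "induced_cycle W (edges_within E W) c"
  then have cyc: "is_cycle W (edges_within E W) c" by (simp add: induced_cycle_def)
  then have cW: "set c \<subseteq> W" by (simp add: is_cycle_def)
  have "is_cycle V E c" using cyc WV unfolding is_cycle_def edges_within_def by auto
  moreover have "\<forall>i < length c. \<forall>j < length c. E (c ! i) (c ! j) \<longrightarrow>
        j = (i + 1) mod length c \<or> i = (j + 1) mod length c"
  proof (intro allI impI)
    fix i j assume ij: "i < length c" "j < length c" and e: "E (c ! i) (c ! j)"
    have "c ! i \<in> W" "c ! j \<in> W" using ij cW by auto
    then have "edges_within E W (c ! i) (c ! j)" using e by (simp add: edges_within_def)
    then show "j = (i + 1) mod length c \<or> i = (j + 1) mod length c"
      using ic ij unfolding induced_cycle_def by blast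
  qed
  ultimately have "induced_cycle V E c" by (simp add: induced_cycle_def)
  then show "length c = 3" using ch by (simp add: chordal_def)
qed

text \<open>Dirac's lemma in the form needed for its inductive proof: a simplicial vertex, and two
  non-adjacent ones unless the graph is complete.\<close>
definition dirac_simplicial :: "'a set \<Rightarrow> ('a \<Rightarrow> 'a \<Rightarrow> bool) \<Rightarrow> bool" where
  "dirac_simplicial V E \<longleftrightarrow> (\<exists>v. simplicial V E v) \<and> ((\<exists>a\<in>V. \<exists>b\<in>V. a \<noteq> b \<and> \<not> E a b) \<longrightarrow>
     (\<exists>u w. simplicial V E u \<and> simplicial V E w \<and> u \<noteq> w \<and> \<not> E u w))"

text \<open>If the separator S is a clique, a simplicial vertex of G[C \<union> S] that is not in S is
  simplicial in G, since all its neighbours lie in C \<union> S.\<close>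
lemma simplicial_in_component:
  assumes G: "graph V E" and SV: "S \<subseteq> V" and clq: "\<And>x y. x \<in> S \<Longrightarrow> y \<in> S \<Longrightarrow> x \<noteq> y \<Longrightarrow> E x y"
    and c: "c \<in> V - S"
    and IH: "dirac_simplicial (component V E S c \<union> S) (edges_within E (component V E S c \<union> S))"
  shows "\<exists>z\<in>component V E S c. simplicial V E z"
proof -
  define W where "W = component V E S c \<union> S"
  have cS: "component V E S c \<subseteq> V - S" by (rule component_subset[OF c])
  have cc: "c \<in> component V E S c" unfolding component_def by simp
  have nb: "u \<in> W" if "z \<in> component V E S c" "E z u" for z u
  proof (cases "u \<in> S")
    case False
    then have "u \<in> V - S" using G that(2) by (auto simp: graph_def)
    then show ?thesis using component_closed[OF that(1) _ that(2) c] W_def by blast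
  qed (simp add: W_def)
  have lift: "simplicial V E z"
    if z: "z \<in> component V E S c" and sz: "simplicial W (edges_within E W) z" for z
    unfolding simplicial_def
  proof (intro conjI allI impI)
    show "z \<in> V" using z cS by blast
    fix u w assume "E z u" "E z w" "u \<noteq> w"
    moreover have "u \<in> W" "w \<in> W" "z \<in> W" using nb z calculation W_def by auto
    ultimately have "edges_within E W u w" using sz by (simp add: simplicial_def edges_within_def)
    then show "E u w" by (simp add: edges_within_def)
  qed
  show ?thesis
  proof (cases "\<exists>a\<in>W. \<exists>b\<in>W. a \<noteq> b \<and> \<not> edges_within E W a b")
    case True
    then obtain u w where uw: "simplicial W (edges_within E W) u" "simplicial W (edges_within E W) w"
      "u \<noteq> w" "\<not> edges_within E W u w"
      using IH unfolding dirac_simplicial_def W_def by blast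
    have "u \<in> W" "w \<in> W" using uw(1,2) unfolding simplicial_def by blast+
    moreover have "\<not> E u w" using uw(4) calculation by (simp add: edges_within_def)
    ultimately have "u \<in> component V E S c \<or> w \<in> component V E S c"
      using clq[of u w] uw(3) unfolding W_def by blast
    then show ?thesis using lift uw(1,2) by blast
  next
    case False
    have "simplicial V E c" unfolding simplicial_def
    proof (intro conjI allI impI)
      show "c \<in> V" using c by blast
      fix u w assume "E c u" "E c w" "u \<noteq> w"
      moreover have "u \<in> W" "w \<in> W" using nb cc calculation by auto
      ultimately have "edges_within E W u w" using False by blast
      then show "E u w" by (simp add: edges_within_def)
    qed
    then show ?thesis using cc by blast
  qed
qed

lemma chordal_dirac_simplicial:
  assumes "graph V E" "chordal V E" "V \<noteq> {}"
  shows "dirac_simplicial V E"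
  using assms
proof (induction "card V" arbitrary: V E rule: less_induct)
  case less
  note G = less.prems(1) and ch = less.prems(2)
  have sym: "\<And>u v. E u v \<Longrightarrow> E v u" and irr: "\<And>u. \<not> E u u"
    and Ein: "\<And>u v. E u v \<Longrightarrow> u \<in> V \<and> v \<in> V" using G by (auto simp: graph_def)
  show ?case
  proof (cases "\<exists>a\<in>V. \<exists>b\<in>V. a \<noteq> b \<and> \<not> E a b")
    case False
    obtain v where "v \<in> V" using less.prems(3) by blast
    then have "simplicial V E v" unfolding simplicial_def using False Ein by blast
    then show ?thesis using False unfolding dirac_simplicial_def by blast
  next
    case True
    then obtain a b where ab: "a \<in> V" "b \<in> V" "a \<noteq> b" "\<not> E a b" by blast
    obtain S where SV: "S \<subseteq> V - {a, b}" and sepS: "\<not> (edges_within E (V - S))\<^sup>*\<^sup>* a b"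
      and Smin: "\<forall>S'. S' \<subseteq> V - {a, b} \<longrightarrow> \<not> (edges_within E (V - S'))\<^sup>*\<^sup>* a b \<longrightarrow> card S \<le> card S'"
      using minimal_separator_exists[OF G ab] by blast
    have clq: "E x y" if "x \<in> S" "y \<in> S" "x \<noteq> y" for x y
      by (rule minimal_separator_clique[OF G ch ab(1,2) SV sepS Smin that])
    have side: "\<exists>z\<in>component V E S c. simplicial V E z"
      if c: "c \<in> V - S" and d: "d \<in> V - S" and sep: "\<not> (edges_within E (V - S))\<^sup>*\<^sup>* c d" for c d
    proof (rule simplicial_in_component[OF G _ clq c])
      let ?W = "component V E S c \<union> S"
      have WV: "?W \<subseteq> V" using component_subset[OF c] SV by blast
      moreover have "d \<notin> ?W" using sep d unfolding component_def by blast
      ultimately have "card ?W < card V"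
        by (intro psubset_card_mono) (use G d in \<open>auto simp: graph_def\<close>)
      moreover have "?W \<noteq> {}" using c unfolding component_def by blast
      ultimately show "dirac_simplicial ?W (edges_within E ?W)"
        by (rule less.hyps[OF _ graph_edges_within[OF G WV] chordal_edges_within[OF ch WV]])
    qed (use SV in auto)
    have aS: "a \<in> V - S" and bS: "b \<in> V - S" using ab SV by auto
    have sepS': "\<not> (edges_within E (V - S))\<^sup>*\<^sup>* b a"
      using sepS edges_within_rtranclp_sym[of E, OF sym] by blast
    obtain za where za: "za \<in> component V E S a" "simplicial V E za" using side[OF aS bS sepS] by blast
    obtain zb where zb: "zb \<in> component V E S b" "simplicial V E zb" using side[OF bS aS sepS'] by blast
    have zb_not_a: "zb \<notin> component V E S a"
    proof
      assume "zb \<in> component V E S a"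
      then have "(edges_within E (V - S))\<^sup>*\<^sup>* a zb" "(edges_within E (V - S))\<^sup>*\<^sup>* b zb"
        using zb(1) unfolding component_def by auto
      then show False using sepS edges_within_rtranclp_sym[of E, OF sym] by (meson rtranclp_trans)
    qed
    moreover have "\<not> E za zb"
    proof
      assume "E za zb"
      moreover have "zb \<in> V - S" using zb(1) component_subset[OF bS] by blast
      ultimately show False using component_closed[OF za(1) _ _ aS] zb_not_a by blast
    qed
    ultimately show ?thesis using za zb unfolding dirac_simplicial_def by blast
  qed
qed

lemma connected_on_center:
  assumes sym: "\<And>u v. R u v \<Longrightarrow> R v u" and c: "\<forall>s\<in>W. (edges_within R W)\<^sup>*\<^sup>* s c"
  shows "connected_on W R"
  unfolding connected_on_iff_edges_within
proof (intro ballI)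
  fix u v assume "u \<in> W" "v \<in> W"
  then have "(edges_within R W)\<^sup>*\<^sup>* u c" "(edges_within R W)\<^sup>*\<^sup>* v c" using c by auto
  then show "(edges_within R W)\<^sup>*\<^sup>* u v" using edges_within_rtranclp_sym[of R, OF sym] by (meson rtranclp_trans)
qed

lemma connected_on_add_leaf:
  assumes conn: "connected_on T F" and t0: "t0 \<in> T" and n: "n \<notin> T"
    and F2: "\<And>s t. F2 s t \<longleftrightarrow> F s t \<or> (s = n \<and> t = t0) \<or> (s = t0 \<and> t = n)"
    and sym: "\<And>u v. F u v \<Longrightarrow> F v u"
  shows "connected_on (insert n T) F2"
proof (rule connected_on_center)
  show "\<And>u v. F2 u v \<Longrightarrow> F2 v u" using F2 sym by blast
  show "\<forall>s\<in>insert n T. (edges_within F2 (insert n T))\<^sup>*\<^sup>* s t0"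
  proof
    fix s assume s: "s \<in> insert n T"
    show "(edges_within F2 (insert n T))\<^sup>*\<^sup>* s t0"
    proof (cases "s = n")
      case True
      then have "edges_within F2 (insert n T) s t0" using F2 t0 by (simp add: edges_within_def)
      then show ?thesis by simp
    next
      case False
      then have "(edges_within F T)\<^sup>*\<^sup>* s t0" using s conn t0 by (simp add: connected_on_iff_edges_within)
      then show ?thesis by (rule edges_within_rtranclp_mono) (use F2 in auto)
    qed
  qed
qed

text \<open>On a cycle, the two neighbours of a vertex are distinct.\<close>
lemma is_cycle_pendant:
  assumes c: "is_cycle V E c" and v: "v \<in> set c"
    and out: "\<And>x. E v x \<Longrightarrow> x = t" and into: "\<And>x. E x v \<Longrightarrow> x = t"
  shows False
proof -
  let ?L = "length c"
  have cd: "distinct c" "3 \<le> ?L" using c by (auto simp: is_cycle_def)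
  have adj: "\<And>i. i < ?L \<Longrightarrow> E (c ! i) (c ! ((i + 1) mod ?L))" using c by (simp add: is_cycle_def)
  obtain k where k: "k < ?L" "c ! k = v" using v by (metis in_set_conv_nth)
  define i where "i = (k + ?L - 1) mod ?L"
  have L0: "0 < ?L" using cd(2) by linarith
  have iL: "i < ?L" unfolding i_def by (rule mod_less_divisor[OF L0])
  have i1: "(i + 1) mod ?L = k"
  proof -
    have "(i + 1) mod ?L = ((k + ?L - 1) + 1) mod ?L" unfolding i_def by (simp add: mod_Suc_eq)
    also have "(k + ?L - 1) + 1 = k + ?L" using cd(2) by simp
    finally show ?thesis using k(1) by simp
  qed
  have "c ! ((k + 1) mod ?L) = t" using adj[OF k(1)] k(2) out by simp
  moreover have "c ! i = t" using adj[OF iL] i1 k(2) into by simp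
  moreover have "(k + 1) mod ?L \<noteq> i"
  proof
    assume "(k + 1) mod ?L = i"
    then have "((k + 1) mod ?L + 1) mod ?L = k" using i1 by simp
    then have "(k + 2) mod ?L = (k + 0) mod ?L" using k(1) by (simp add: mod_Suc_eq)
    then show False using mod_add_left_inj[of k 2 ?L 0] cd(2) by linarith
  qed
  then have "c ! ((k + 1) mod ?L) \<noteq> c ! i"
    using nth_eq_iff_index_eq[OF cd(1) _ iL] mod_less_divisor[OF L0] by blast
  ultimately show False by simp
qed

lemma is_tree_add_leaf:
  assumes tr: "is_tree I F" and t0: "t0 \<in> I" and n: "n \<notin> I"
    and F2: "\<And>s t. F2 s t \<longleftrightarrow> F s t \<or> (s = n \<and> t = t0) \<or> (s = t0 \<and> t = n)"
  shows "is_tree (insert n I) F2"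
proof -
  have G: "graph I F" and conn: "connected_on I F" and nc: "\<not> (\<exists>c. is_cycle I F c)"
    using tr by (auto simp: is_tree_def)
  have Fin: "\<And>u v. F u v \<Longrightarrow> u \<in> I \<and> v \<in> I \<and> u \<noteq> v \<and> F v u" using G by (auto simp: graph_def)
  have sym: "\<And>u v. F u v \<Longrightarrow> F v u" using Fin by blast
  have G2: "graph (insert n I) F2"
    using G t0 n unfolding graph_def F2 by auto
  have conn2: "connected_on (insert n I) F2" by (rule connected_on_add_leaf[OF conn t0 n F2 sym])
  have nc2: "\<not> (\<exists>c. is_cycle (insert n I) F2 c)"
  proof
    assume "\<exists>c. is_cycle (insert n I) F2 c"
    then obtain c where c: "is_cycle (insert n I) F2 c" by blast
    let ?L = "length c"
    have cd: "distinct c" "3 \<le> ?L" "set c \<subseteq> insert n I" using c by (auto simp: is_cycle_def)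
    have adj: "\<And>i. i < ?L \<Longrightarrow> F2 (c ! i) (c ! ((i + 1) mod ?L))" using c by (simp add: is_cycle_def)
    show False
    proof (cases "n \<in> set c")
      case False
      then have "set c \<subseteq> I" using cd by blast
      moreover have "\<And>i. i < ?L \<Longrightarrow> F (c ! i) (c ! ((i + 1) mod ?L))"
      proof -
        fix i assume i: "i < ?L"
        have L0: "0 < ?L" using cd(2) by linarith
        have "(i + 1) mod ?L < ?L" using mod_less_divisor[OF L0] by blast
        then have "c ! ((i + 1) mod ?L) \<in> set c" "c ! i \<in> set c" using i by simp_all
        then have "c ! i \<noteq> n" "c ! ((i + 1) mod ?L) \<noteq> n" using False by auto
        then show "F (c ! i) (c ! ((i + 1) mod ?L))" using adj[OF i] F2 by blast
      qed
      ultimately have "is_cycle I F c" using cd by (simp add: is_cycle_def)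
      then show False using nc by blast
    next
      case True
      show False
      proof (rule is_cycle_pendant[OF c True])
        show "\<And>x. F2 n x \<Longrightarrow> x = t0" "\<And>x. F2 x n \<Longrightarrow> x = t0" using F2 Fin n by blast+
      qed
    qed
  qed
  show ?thesis unfolding is_tree_def using G2 conn2 nc2 by blast
qed

text \<open>Every clique lies in a bag: the subtrees of its vertices pairwise meet, so Helly applies.\<close>
lemma tree_decomposition_clique_bag:
  assumes td: "tree_decomposition V E I F B" and KV: "K \<subseteq> V"
    and K: "\<And>u w. u \<in> K \<Longrightarrow> w \<in> K \<Longrightarrow> u \<noteq> w \<Longrightarrow> E u w"
  shows "\<exists>t\<in>I. K \<subseteq> B t"
proof -
  have tree: "graph I F" "\<not> (\<exists>c. is_cycle I F c)" "I \<noteq> {}" and U: "(\<Union>t\<in>I. B t) = V"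
    and edge: "\<And>u w. E u w \<Longrightarrow> \<exists>t\<in>I. u \<in> B t \<and> w \<in> B t"
    and tv: "\<And>x. x \<in> V \<Longrightarrow> connected_on {t \<in> I. x \<in> B t} F"
    using td unfolding tree_decomposition_def is_tree_def by blast+
  define \<T> where "\<T> = (\<lambda>u. {t\<in>I. u \<in> B t}) ` K"
  have "\<forall>T\<in>\<T>. T \<noteq> {} \<and> T \<subseteq> I \<and> connected_on T F"
    unfolding \<T>_def using KV U tv by blast
  moreover have "\<forall>T1\<in>\<T>. \<forall>T2\<in>\<T>. T1 \<inter> T2 \<noteq> {}"
  proof (intro ballI)
    fix T1 T2 assume "T1 \<in> \<T>" "T2 \<in> \<T>"
    then obtain u w where uw: "u \<in> K" "w \<in> K" "T1 = {t\<in>I. u \<in> B t}" "T2 = {t\<in>I. w \<in> B t}"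
      unfolding \<T>_def by blast
    have "\<exists>t\<in>I. u \<in> B t \<and> w \<in> B t"
    proof (cases "u = w")
      case True
      then show ?thesis using uw(1) KV U by blast
    next
      case False
      then show ?thesis using edge K uw(1,2) by blast
    qed
    then show "T1 \<inter> T2 \<noteq> {}" using uw(3,4) by blast
  qed
  ultimately have "\<exists>t\<in>I. \<forall>T\<in>\<T>. t \<in> T" by (rule subtrees_Helly[OF tree])
  then obtain t where t: "t \<in> I" "\<forall>T\<in>\<T>. t \<in> T" by blast
  have "K \<subseteq> B t"
  proof
    fix u assume "u \<in> K"
    then have "{s\<in>I. u \<in> B s} \<in> \<T>" unfolding \<T>_def by blast
    then have "t \<in> {s\<in>I. u \<in> B s}" by (rule bspec[OF t(2)])
    then show "u \<in> B t" by simp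
  qed
  then show ?thesis using t(1) by blast
qed

lemma tree_decomposition_add_leaf:
  fixes E :: "'a \<Rightarrow> 'a \<Rightarrow> bool" and v :: 'a
  defines "N \<equiv> {u. E v u}"
  assumes td: "tree_decomposition (V - {v}) (edges_within E (V - {v})) I F B"
    and G: "graph V E" and vV: "v \<in> V" and t0: "t0 \<in> I" and Nt0: "N \<subseteq> B t0" and n: "n \<notin> I"
  shows "tree_decomposition V E (insert n I) (\<lambda>s t. F s t \<or> (s = n \<and> t = t0) \<or> (s = t0 \<and> t = n))
    (B(n := insert v N))"
proof -
  define F2 where "F2 = (\<lambda>s t. F s t \<or> (s = n \<and> t = t0) \<or> (s = t0 \<and> t = n))"
  define B2 where "B2 = B(n := insert v N)"
  have tree: "is_tree I F" and U: "(\<Union>t\<in>I. B t) = V - {v}"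
    and edge: "\<And>u w. edges_within E (V - {v}) u w \<Longrightarrow> \<exists>t\<in>I. u \<in> B t \<and> w \<in> B t"
    and tv: "\<And>x. x \<in> V - {v} \<Longrightarrow> connected_on {t \<in> I. x \<in> B t} F"
    using td unfolding tree_decomposition_def by blast+
  have Fsym: "\<And>u w. F u w \<Longrightarrow> F w u" using tree by (auto simp: is_tree_def graph_def)
  have Ein: "\<And>u w. E u w \<Longrightarrow> u \<in> V \<and> w \<in> V \<and> u \<noteq> w \<and> E w u" using G by (auto simp: graph_def)
  have B2: "\<And>t. t \<in> I \<Longrightarrow> B2 t = B t" "B2 n = insert v N" using n by (auto simp: B2_def)
  have "is_tree (insert n I) F2" by (rule is_tree_add_leaf[OF tree t0 n]) (simp add: F2_def)
  moreover have "(\<Union>t\<in>insert n I. B2 t) = V" using B2 U vV Ein by (auto simp: N_def)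
  moreover have "\<exists>t\<in>insert n I. u \<in> B2 t \<and> w \<in> B2 t" if e: "E u w" for u w
  proof (cases "u = v \<or> w = v")
    case True
    then show ?thesis using e Ein B2(2) by (auto simp: N_def)
  next
    case False
    then have "edges_within E (V - {v}) u w" using e Ein by (auto simp: edges_within_def)
    then show ?thesis using edge B2(1) by fastforce
  qed
  moreover have "connected_on {t \<in> insert n I. x \<in> B2 t} F2" if xV: "x \<in> V" for x
  proof -
    consider "x = v" | "x \<noteq> v" "x \<in> N" | "x \<noteq> v" "x \<notin> N" by blast
    then show ?thesis
    proof cases
      case 1
      then have "{t \<in> insert n I. x \<in> B2 t} = {n}" using B2 U by auto
      then show ?thesis by (simp add: connected_on_def)
    next
      case 2
      then have eq: "{t \<in> insert n I. x \<in> B2 t} = insert n {t\<in>I. x \<in> B t}" using B2 by auto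
      have "connected_on {t\<in>I. x \<in> B t} F" using tv xV 2(1) by blast
      then have "connected_on (insert n {t\<in>I. x \<in> B t}) F2"
        by (rule connected_on_add_leaf[OF _ _ _ _ Fsym]) (use 2 Nt0 t0 n in \<open>auto simp: F2_def\<close>)
      then show ?thesis unfolding eq .
    next
      case 3
      then have "{t \<in> insert n I. x \<in> B2 t} = {t\<in>I. x \<in> B t}" using B2 by auto
      moreover have "edges_within F2 {t\<in>I. x \<in> B t} = edges_within F {t\<in>I. x \<in> B t}"
        using n by (auto simp: edges_within_def fun_eq_iff F2_def)
      ultimately show ?thesis using tv xV 3(1) by (simp add: connected_on_iff_edges_within)
    qed
  qed
  ultimately show ?thesis unfolding tree_decomposition_def F2_def[symmetric] B2_def[symmetric] by blast
qed

text \<open>Chordal graphs have a tree decomposition into cliques: add a simplicial vertex together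
  with its neighbourhood as a new leaf bag attached to a bag containing the neighbourhood.\<close>
lemma chordal_clique_tree_decomposition:
  assumes "graph V E" "chordal V E"
  shows "\<exists>(I :: nat set) F B. tree_decomposition V E I F B \<and> (\<forall>t\<in>I. \<forall>u\<in>B t. \<forall>w\<in>B t. u \<noteq> w \<longrightarrow> E u w)"
  using assms
proof (induction "card V" arbitrary: V E rule: less_induct)
  case less
  note G = less.prems(1) and ch = less.prems(2)
  show ?case
  proof (cases "V = {}")
    case True
    have "tree_decomposition V E {0::nat} (\<lambda>_ _. False) (\<lambda>_. V)" by (rule tree_decomposition_single_bag[OF G])
    moreover have "\<forall>t\<in>{0::nat}. \<forall>u\<in>V. \<forall>w\<in>V. u \<noteq> w \<longrightarrow> E u w" using True by simp
    ultimately show ?thesis by blast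
  next
    case False
    obtain v where sv: "simplicial V E v"
      using chordal_dirac_simplicial[OF G ch False] by (auto simp: dirac_simplicial_def)
    have vV: "v \<in> V" using sv by (simp add: simplicial_def)
    have Esym: "\<And>u w. E u w \<Longrightarrow> E w u" using G by (auto simp: graph_def)
    have VV: "V - {v} \<subseteq> V" by blast
    have "card (V - {v}) < card V" using vV G by (intro card_Diff1_less) (auto simp: graph_def)
    from less.hyps[OF this graph_edges_within[OF G VV] chordal_edges_within[OF ch VV]]
    obtain I :: "nat set" and F B where td: "tree_decomposition (V - {v}) (edges_within E (V - {v})) I F B"
      and cl: "\<forall>t\<in>I. \<forall>u\<in>B t. \<forall>w\<in>B t. u \<noteq> w \<longrightarrow> edges_within E (V - {v}) u w"
      by blast
    define N where "N = {u. E v u}"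
    have NV: "N \<subseteq> V - {v}" using G by (auto simp: N_def graph_def)
    have Ncl: "\<And>u w. u \<in> N \<Longrightarrow> w \<in> N \<Longrightarrow> u \<noteq> w \<Longrightarrow> E u w" using sv by (auto simp: simplicial_def N_def)
    have "\<And>u w. u \<in> N \<Longrightarrow> w \<in> N \<Longrightarrow> u \<noteq> w \<Longrightarrow> edges_within E (V - {v}) u w"
      using Ncl NV by (auto simp: edges_within_def)
    then obtain t0 where t0: "t0 \<in> I" "N \<subseteq> B t0"
      using tree_decomposition_clique_bag[OF td NV] by blast
    have finI: "finite I" using td by (simp add: tree_decomposition_def is_tree_def graph_def)
    define n where "n = Suc (Max I)"
    have n: "n \<notin> I" using Max_ge[OF finI] n_def by fastforce
    have "E u w"
      if "t \<in> insert n I" "u \<in> (B(n := insert v N)) t" "w \<in> (B(n := insert v N)) t" "u \<noteq> w" for t u w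
    proof (cases "t = n")
      case True
      then have "u \<in> insert v N" "w \<in> insert v N" using that(2,3) by auto
      then consider "u = v" "w \<in> N" | "w = v" "u \<in> N" | "u \<in> N" "w \<in> N" using \<open>u \<noteq> w\<close> by blast
      then show ?thesis
      proof cases
        case 1
        then show ?thesis by (simp add: N_def)
      next
        case 2
        then show ?thesis using Esym by (simp add: N_def)
      next
        case 3
        then show ?thesis using Ncl \<open>u \<noteq> w\<close> by blast
      qed
    next
      case False
      then have "t \<in> I" "u \<in> B t" "w \<in> B t" using that by auto
      then show ?thesis using cl \<open>u \<noteq> w\<close> by (auto simp: edges_within_def)
    qed
    moreover have "tree_decomposition V E (insert n I) (\<lambda>s t. F s t \<or> (s = n \<and> t = t0) \<or> (s = t0 \<and> t = n))
      (B(n := insert v N))"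
      by (rule tree_decomposition_add_leaf[OF td G vV t0(1) t0(2)[unfolded N_def] n, folded N_def])
    ultimately show ?thesis by blast
  qed
qed

lemma lct_le_clique_number:
  assumes G: "graph V E" and tc: "two_connected V E" and ch: "chordal V E"
  shows "lct V E \<le> clique_number V E"
proof -
  obtain I :: "nat set" and F B where td: "tree_decomposition V E I F B"
    and cl: "\<forall>t\<in>I. \<forall>u\<in>B t. \<forall>w\<in>B t. u \<noteq> w \<longrightarrow> E u w"
    using chordal_clique_tree_decomposition[OF G ch] by blast
  obtain t where t: "t \<in> I" "lct V E \<le> card (B t)" using lct_le_some_bag[OF G tc td] by blast
  have BV: "B t \<subseteq> V" using tree_decomposition_bag_subset[OF td t(1)] .
  have mem: "card (B t) \<in> {card K | K. K \<subseteq> V \<and> (\<forall>u\<in>K. \<forall>v\<in>K. u \<noteq> v \<longrightarrow> E u v)}"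
    using BV cl t(1) by blast
  have fin: "finite {card K | K. K \<subseteq> V \<and> (\<forall>u\<in>K. \<forall>v\<in>K. u \<noteq> v \<longrightarrow> E u v)}"
  proof -
    have "{card K | K. K \<subseteq> V \<and> (\<forall>u\<in>K. \<forall>v\<in>K. u \<noteq> v \<longrightarrow> E u v)} \<subseteq> card ` Pow V" by blast
    moreover have "finite V" using G by (simp add: graph_def)
    ultimately show ?thesis using finite_subset by blast
  qed
  have "card (B t) \<le> clique_number V E" unfolding clique_number_def using Max_ge[OF fin mem] .
  then show ?thesis using t(2) by linarith
qed

theorem corollary5p4:
  fixes V :: "'a set" and E :: "'a \<Rightarrow> 'a \<Rightarrow> bool"
  assumes "graph V E" and "two_connected V E"
  shows "lct V E \<le> treewidth V E + 1 \<and> (chordal V E \<longrightarrow> lct V E \<le> clique_number V E)"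
  using lct_le_treewidth[OF assms] lct_le_clique_number[OF assms] by blast

end
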